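(* Let $\Omega\subset\mathbb{R}^2$ be a domain (connected open set) and let $u\in C^{2}(\Omega)$. Let $S(u)=\{(x,y)\in\Omega: u_x-y=0,\ u_y+x=0\}$, and on $\Omega\setminus S(u)$ let $D=\sqrt{(u_x-y)^2+(u_y+x)^2}$, $N(u)=(u_x-y,\,u_y+x)/D$ and $H=\operatorname{div}N(u)$ (the Euclidean divergence in the $xy$-plane). Let $p_0\in S(u)$ and suppose there are a constant $C>0$ and a neighborhood of $p_0$ on which $|H(p)|\le C/r(p)$ for all $p\notin S(u)$, where $r(p)=|p-p_0|$. Then either $p_0$ is an isolated point of $S(u)$, or there exists a small neighborhood of $p_0$ whose intersection with $S(u)$ is exactly a $C^{1}$ smooth curve passing through $p_0$. *)

theory Defs
  imports "HOL-Analysis.Analysis"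
begin

definition px :: "(real \<times> real \<Rightarrow> real) \<Rightarrow> real \<times> real \<Rightarrow> real" where
  "px f p = deriv (\<lambda>t. f (t, snd p)) (fst p)"

definition py :: "(real \<times> real \<Rightarrow> real) \<Rightarrow> real \<times> real \<Rightarrow> real" where
  "py f p = deriv (\<lambda>t. f (fst p, t)) (snd p)"

definition C1_on :: "(real \<times> real) set \<Rightarrow> (real \<times> real \<Rightarrow> real) \<Rightarrow> bool" where
  "C1_on \<Omega> f \<longleftrightarrow>
     (\<forall>p\<in>\<Omega>. (\<lambda>t. f (t, snd p)) field_differentiable (at (fst p))
            \<and> (\<lambda>t. f (fst p, t)) field_differentiable (at (snd p)))
     \<and> continuous_on \<Omega> f \<and> continuous_on \<Omega> (px f) \<and> continuous_on \<Omega> (py f)"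

definition C2_on :: "(real \<times> real) set \<Rightarrow> (real \<times> real \<Rightarrow> real) \<Rightarrow> bool" where
  "C2_on \<Omega> f \<longleftrightarrow> C1_on \<Omega> f \<and> C1_on \<Omega> (px f) \<and> C1_on \<Omega> (py f)"

definition Sing :: "(real \<times> real) set \<Rightarrow> (real \<times> real \<Rightarrow> real) \<Rightarrow> (real \<times> real) set" where
  "Sing \<Omega> u = {p \<in> \<Omega>. px u p - snd p = 0 \<and> py u p + fst p = 0}"

definition Dlen :: "(real \<times> real \<Rightarrow> real) \<Rightarrow> real \<times> real \<Rightarrow> real" where
  "Dlen u p = sqrt ((px u p - snd p)\<^sup>2 + (py u p + fst p)\<^sup>2)"

definition N1 :: "(real \<times> real \<Rightarrow> real) \<Rightarrow> real \<times> real \<Rightarrow> real" where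
  "N1 u p = (px u p - snd p) / Dlen u p"

definition N2 :: "(real \<times> real \<Rightarrow> real) \<Rightarrow> real \<times> real \<Rightarrow> real" where
  "N2 u p = (py u p + fst p) / Dlen u p"

text \<open>H = div N(u), meaningful on \<Omega> minus the singular set.\<close>
definition Hcurv :: "(real \<times> real \<Rightarrow> real) \<Rightarrow> real \<times> real \<Rightarrow> real" where
  "Hcurv u p = px (N1 u) p + py (N2 u) p"

definition C1_arc_through :: "(real \<times> real) set \<Rightarrow> real \<times> real \<Rightarrow> bool" where
  "C1_arc_through \<Gamma> p0 \<longleftrightarrow>
     (\<exists>\<gamma> \<gamma>' a b. a < 0 \<and> 0 < b \<and>
        (\<forall>t\<in>{a<..<b}. (\<gamma> has_vector_derivative \<gamma>' t) (at t) \<and> \<gamma>' t \<noteq> 0) \<and>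
        continuous_on {a<..<b} \<gamma>' \<and> inj_on \<gamma> {a<..<b} \<and>
        \<gamma> 0 = p0 \<and> \<Gamma> = \<gamma> ` {a<..<b})"

end

theory Submission
  imports Defs
begin

text \<open>
  Write F = (a, b) = (u_x - y, u_y + x). Then Sing \<Omega> u is the zero set of F, and H is the
  divergence of F / |F|. By symmetry of the second derivatives, b_x - a_y = 2 at p0, so the
  Jacobian M of F at p0 is not zero.

  If M is invertible, p0 is an isolated zero of F. Otherwise M has rank one; as M is not
  antisymmetric there is a direction l with l \<bullet> M l \<noteq> 0. Then \<phi> = l \<bullet> F has nonzero gradient
  at p0, and by the implicit function theorem its zero set is a C^1 arc through p0. Where F does not
  vanish on this arc, F is orthogonal to l, and H |F| |l|^2 equals the quadratic form of DF(q) at l,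
  which tends to l \<bullet> M l \<noteq> 0. Since M has rank one and l is not orthogonal to its image, F = o(r)
  along the arc, so |H| r would be unbounded, contradicting |H| \<le> C / r. Hence F vanishes on the
  arc near p0, which is therefore the singular set near p0.
\<close>

section \<open>Partial derivatives in the plane\<close>

lemma dist_Pair_le_sum_abs: "dist (s, t) (x, y) \<le> \<bar>s - x\<bar> + \<bar>t - y\<bar>" for s t x y :: real
  using sqrt_sum_squares_le_sum_abs[of "s - x" "t - y"] by (simp add: dist_Pair_Pair dist_real_def)

lemma has_derivative_of_partials:
  fixes f fx fy :: "real \<times> real \<Rightarrow> real"
  assumes "open W" "p \<in> W"
    and fx: "DERIV (\<lambda>t. f (t, snd p)) (fst p) :> fx p"
    and fy: "\<And>q. q \<in> W \<Longrightarrow> DERIV (\<lambda>t. f (fst q, t)) (snd q) :> fy q"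
    and cont: "isCont fy p"
  shows "(f has_derivative (\<lambda>h. fx p * fst h + fy p * snd h)) (at p)"
proof -
  obtain x y where p: "p = (x, y)" by (cases p)
  obtain r where r: "r > 0" "ball p r \<subseteq> W" using assms(1,2) open_contains_ball by blast
  define X where "X = ball x (r/2)"
  define Y where "Y = ball y (r/2)"
  have XY: "X \<times> Y \<subseteq> W"
  proof
    fix q assume "q \<in> X \<times> Y"
    then have "dist q p < r"
      using p sqrt_sum_squares_le_sum_abs[of "dist (fst q) x" "dist (snd q) y"]
      by (cases q) (auto simp: X_def Y_def dist_Pair_Pair dist_commute)
    then show "q \<in> W" using r(2) by (auto simp: dist_commute)
  qed
  have "((\<lambda>(s, t). f (s, t)) has_derivative (\<lambda>(hs, ht). fx p * hs + blinfun_mult_right (fy (x, y)) ht))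
        (at (x, y) within X \<times> Y)"
  proof (rule has_derivative_partialsI)
    show "((\<lambda>s. f (s, y)) has_derivative (*) (fx p)) (at x within X)"
      using fx p by (auto simp: has_field_derivative_def intro: has_derivative_at_withinI)
    show "((\<lambda>t. f (s, t)) has_derivative blinfun_apply (blinfun_mult_right (fy (s, t)))) (at t within Y)"
      if "s \<in> X" "t \<in> Y" for s t
      using fy[of "(s, t)"] XY that
      by (auto simp: has_field_derivative_def mult.commute intro: has_derivative_at_withinI)
    show "continuous (at (x, y) within X \<times> Y) (\<lambda>(s, t). blinfun_mult_right (fy (s, t)))"
      using cont p
      by (auto intro!: continuous_at_imp_continuous_within
          bounded_linear.continuous[OF bounded_linear_blinfun_mult_right] simp: split_beta')
    show "y \<in> Y" "convex Y" using r by (auto simp: Y_def)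
  qed
  moreover have "at (x, y) within X \<times> Y = at p"
    using p r by (auto simp: X_def Y_def intro!: at_within_open open_Times)
  ultimately show ?thesis using p by (simp add: split_beta' mult.commute)
qed

lemma has_derivative_eventually_le:
  assumes "(f has_derivative f') (at x)" "e > 0"
  shows "\<forall>\<^sub>F y in nhds x. norm (f y - f x - f' (y - x)) \<le> e * norm (y - x)"
  using assms unfolding has_derivative_at_alt eventually_nhds_metric dist_norm by blast

lemma isolated_zero_of_injective_derivative:
  fixes F :: "'a::real_normed_vector \<Rightarrow> 'b::euclidean_space"
  assumes F: "(F has_derivative F') (at p)" and "inj F'" "F p = 0"
  shows "\<forall>\<^sub>F q in nhds p. F q = 0 \<longrightarrow> q = p"
proof -
  obtain B where "B > 0" and B: "\<And>h. B * norm h \<le> norm (F' h)"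
    using linear_inj_bounded_below_pos[OF has_derivative_linear[OF F] \<open>inj F'\<close>] by blast
  have "B / 2 > 0" using \<open>B > 0\<close> by simp
  from has_derivative_eventually_le[OF F this] show ?thesis
  proof (rule eventually_mono, intro impI)
    fix q assume "norm (F q - F p - F' (q - p)) \<le> B / 2 * norm (q - p)" "F q = 0"
    then have "B * norm (q - p) \<le> B / 2 * norm (q - p)" using B[of "q - p"] \<open>F p = 0\<close> by simp
    then show "q = p" using \<open>B > 0\<close> by (simp add: mult_le_cancel_right)
  qed
qed

lemma second_difference_mvt:
  fixes u ux uxy :: "real \<times> real \<Rightarrow> real"
  assumes "h > 0"
    and ux: "\<And>s t. x \<le> s \<Longrightarrow> s \<le> x + h \<Longrightarrow> y \<le> t \<Longrightarrow> t \<le> y + h \<Longrightarrow>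
               DERIV (\<lambda>s. u (s, t)) s :> ux (s, t)"
    and uxy: "\<And>s t. x \<le> s \<Longrightarrow> s \<le> x + h \<Longrightarrow> y \<le> t \<Longrightarrow> t \<le> y + h \<Longrightarrow>
               DERIV (\<lambda>t. ux (s, t)) t :> uxy (s, t)"
  obtains \<xi> \<eta> where "x < \<xi>" "\<xi> < x + h" "y < \<eta>" "\<eta> < y + h"
    and "u (x + h, y + h) - u (x + h, y) - u (x, y + h) + u (x, y) = h\<^sup>2 * uxy (\<xi>, \<eta>)"
proof -
  have "DERIV (\<lambda>s. u (s, y + h) - u (s, y)) s :> ux (s, y + h) - ux (s, y)"
    if "x \<le> s" "s \<le> x + h" for s
    using that \<open>h > 0\<close> by (intro DERIV_diff ux) auto
  then obtain \<xi> where \<xi>: "x < \<xi>" "\<xi> < x + h"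
    and "(u (x + h, y + h) - u (x + h, y)) - (u (x, y + h) - u (x, y))
           = h * (ux (\<xi>, y + h) - ux (\<xi>, y))"
    using MVT2[of x "x + h"] \<open>h > 0\<close> by fastforce
  moreover obtain \<eta> where "y < \<eta>" "\<eta> < y + h" "ux (\<xi>, y + h) - ux (\<xi>, y) = h * uxy (\<xi>, \<eta>)"
    using MVT2[of y "y + h" "\<lambda>t. ux (\<xi>, t)" "\<lambda>t. uxy (\<xi>, t)"] uxy \<xi> \<open>h > 0\<close> by fastforce
  ultimately show ?thesis
    by (intro that[of \<xi> \<eta>]) (simp_all add: power2_eq_square algebra_simps)
qed

lemma mixed_partials_eq:
  fixes u ux uy uxy uyx :: "real \<times> real \<Rightarrow> real"
  assumes "open W" "p \<in> W"
    and ux: "\<And>q. q \<in> W \<Longrightarrow> DERIV (\<lambda>t. u (t, snd q)) (fst q) :> ux q"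
    and uy: "\<And>q. q \<in> W \<Longrightarrow> DERIV (\<lambda>t. u (fst q, t)) (snd q) :> uy q"
    and uxy: "\<And>q. q \<in> W \<Longrightarrow> DERIV (\<lambda>t. ux (fst q, t)) (snd q) :> uxy q"
    and uyx: "\<And>q. q \<in> W \<Longrightarrow> DERIV (\<lambda>t. uy (t, snd q)) (fst q) :> uyx q"
    and "isCont uxy p" "isCont uyx p"
  shows "uxy p = uyx p"
proof (rule ccontr)
  assume "uxy p \<noteq> uyx p"
  then have e: "\<bar>uxy p - uyx p\<bar> / 2 > 0" by simp
  obtain x y where p: "p = (x, y)" by (cases p)
  have "\<forall>\<^sub>F q in nhds p. q \<in> W \<and> dist (uxy q) (uxy p) < \<bar>uxy p - uyx p\<bar> / 2
                          \<and> dist (uyx q) (uyx p) < \<bar>uxy p - uyx p\<bar> / 2"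
    using e assms(1,2) \<open>isCont uxy p\<close> \<open>isCont uyx p\<close>
    by (intro eventually_conj eventually_nhds_in_open tendstoD)
       (simp_all add: isCont_def tendsto_at_iff_tendsto_nhds)
  then obtain r where r: "r > 0" and near: "\<And>q. dist q p < r \<Longrightarrow> q \<in> W
      \<and> dist (uxy q) (uxy p) < \<bar>uxy p - uyx p\<bar> / 2 \<and> dist (uyx q) (uyx p) < \<bar>uxy p - uyx p\<bar> / 2"
    unfolding eventually_nhds_metric by blast
  define h where "h = r / 3"
  have h: "h > 0" using r by (simp add: h_def)
  have box: "dist (s, t) p < r" if "x \<le> s" "s \<le> x + h" "y \<le> t" "t \<le> y + h" for s t
    using dist_Pair_le_sum_abs[of s t x y] that p r by (simp add: h_def)
  have inW: "(s, t) \<in> W" if "x \<le> s" "s \<le> x + h" "y \<le> t" "t \<le> y + h" for s t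
    using near box[OF that] by blast
  obtain \<xi> \<eta> where \<xi>\<eta>: "x < \<xi>" "\<xi> < x + h" "y < \<eta>" "\<eta> < y + h"
    and 1: "u (x + h, y + h) - u (x + h, y) - u (x, y + h) + u (x, y) = h\<^sup>2 * uxy (\<xi>, \<eta>)"
  proof (rule second_difference_mvt[OF h])
    show "DERIV (\<lambda>s. u (s, t)) s :> ux (s, t)"
      and "DERIV (\<lambda>t. ux (s, t)) t :> uxy (s, t)"
      if "x \<le> s" "s \<le> x + h" "y \<le> t" "t \<le> y + h" for s t
      using ux[OF inW[OF that]] uxy[OF inW[OF that]] by simp_all
  qed
  \<comment> \<open>The same second difference, with the roles of the two variables exchanged.\<close>
  obtain \<eta>' \<xi>' where \<xi>\<eta>': "y < \<eta>'" "\<eta>' < y + h" "x < \<xi>'" "\<xi>' < x + h"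
    and 2: "u (x + h, y + h) - u (x, y + h) - u (x + h, y) + u (x, y) = h\<^sup>2 * uyx (\<xi>', \<eta>')"
  proof (rule second_difference_mvt[OF h, where u = "\<lambda>(t, s). u (s, t)"
        and ux = "\<lambda>(t, s). uy (s, t)" and uxy = "\<lambda>(t, s). uyx (s, t)"])
    show "DERIV (\<lambda>t. (\<lambda>(t, s). u (s, t)) (t, s)) t :> (\<lambda>(t, s). uy (s, t)) (t, s)"
      and "DERIV (\<lambda>s. (\<lambda>(t, s). uy (s, t)) (t, s)) s :> (\<lambda>(t, s). uyx (s, t)) (t, s)"
      if "y \<le> t" "t \<le> y + h" "x \<le> s" "s \<le> x + h" for s t
      using uy[OF inW[OF that(3,4,1,2)]] uyx[OF inW[OF that(3,4,1,2)]] by simp_all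
  qed (simp_all add: algebra_simps)
  have "h\<^sup>2 * uxy (\<xi>, \<eta>) = h\<^sup>2 * uyx (\<xi>', \<eta>')" using 1 2 by argo
  then have "uxy (\<xi>, \<eta>) = uyx (\<xi>', \<eta>')" using h by simp
  moreover have "dist (uxy (\<xi>, \<eta>)) (uxy p) < \<bar>uxy p - uyx p\<bar> / 2"
    and "dist (uyx (\<xi>', \<eta>')) (uyx p) < \<bar>uxy p - uyx p\<bar> / 2"
    using near box \<xi>\<eta> \<xi>\<eta>' by auto
  ultimately show False
    using abs_triangle_ineq[of "uxy p - uxy (\<xi>, \<eta>)" "uyx (\<xi>', \<eta>') - uyx p"]
    by (simp add: dist_real_def abs_minus_commute)
qed

section \<open>The implicit function theorem\<close>

lemma perturbed_linear_equation_bound: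
  fixes A B \<epsilon> ds dg :: real
  assumes "B \<noteq> 0" and R: "\<bar>A * ds + B * dg\<bar> \<le> \<epsilon> * (\<bar>ds\<bar> + \<bar>dg\<bar>)" and "0 \<le> \<epsilon>" "\<epsilon> \<le> \<bar>B\<bar> / 2"
  shows "\<bar>B\<bar> * \<bar>dg - - A / B * ds\<bar> \<le> \<epsilon> * ((1 + 2 * (\<bar>A\<bar> + \<bar>B\<bar>) / \<bar>B\<bar>) * \<bar>ds\<bar>)"
proof -
  have "\<bar>B\<bar> * \<bar>dg\<bar> \<le> \<bar>A * ds + B * dg\<bar> + \<bar>A\<bar> * \<bar>ds\<bar>"
    using abs_triangle_ineq4[of "A * ds + B * dg" "A * ds"] by (simp add: abs_mult)
  moreover have "\<epsilon> * (\<bar>ds\<bar> + \<bar>dg\<bar>) \<le> \<bar>B\<bar> / 2 * (\<bar>ds\<bar> + \<bar>dg\<bar>)"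
    using \<open>\<epsilon> \<le> \<bar>B\<bar> / 2\<close> by (intro mult_right_mono) auto
  moreover have "\<bar>B\<bar> / 2 * (\<bar>ds\<bar> + \<bar>dg\<bar>) = \<bar>B\<bar> * \<bar>ds\<bar> / 2 + \<bar>B\<bar> * \<bar>dg\<bar> / 2"
    by (simp add: algebra_simps)
  moreover have "0 \<le> \<bar>B\<bar> * \<bar>ds\<bar>" by simp
  ultimately have "\<bar>B\<bar> * \<bar>dg\<bar> \<le> 2 * (\<bar>A\<bar> * \<bar>ds\<bar>) + 2 * (\<bar>B\<bar> * \<bar>ds\<bar>)"
    using R by linarith
  then have "\<bar>dg\<bar> \<le> 2 * (\<bar>A\<bar> + \<bar>B\<bar>) / \<bar>B\<bar> * \<bar>ds\<bar>" using \<open>B \<noteq> 0\<close> by (simp add: field_simps)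
  have "\<bar>B\<bar> * \<bar>dg - - A / B * ds\<bar> = \<bar>A * ds + B * dg\<bar>"
    using \<open>B \<noteq> 0\<close> by (simp add: abs_mult[symmetric] field_simps)
  also have "\<dots> \<le> \<epsilon> * (\<bar>ds\<bar> + \<bar>dg\<bar>)" by (rule R)
  also have "\<dots> \<le> \<epsilon> * ((1 + 2 * (\<bar>A\<bar> + \<bar>B\<bar>) / \<bar>B\<bar>) * \<bar>ds\<bar>)"
    using \<open>\<bar>dg\<bar> \<le> _\<close> \<open>0 \<le> \<epsilon>\<close> by (intro mult_left_mono) (auto simp: algebra_simps)
  finally show ?thesis .
qed

lemma has_field_derivative_implicit:
  fixes \<phi> :: "real \<times> real \<Rightarrow> real" and g :: "real \<Rightarrow> real"
  assumes \<phi>: "(\<phi> has_derivative (\<lambda>h. A * fst h + B * snd h)) (at (s, g s))" and "B \<noteq> 0"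
    and "isCont g s"
    and zero: "\<forall>\<^sub>F t in nhds s. \<phi> (t, g t) = 0"
  shows "DERIV g s :> - A / B"
  unfolding has_field_derivative_def has_derivative_at_alt
proof (intro conjI allI impI)
  show "bounded_linear ((*) (- A / B))" by (rule bounded_linear_mult_right)
  fix e :: real assume "e > 0"
  define L where "L = 1 + 2 * (\<bar>A\<bar> + \<bar>B\<bar>) / \<bar>B\<bar>"
  have "L > 0" by (simp add: L_def add_pos_nonneg)
  define \<epsilon> where "\<epsilon> = min (\<bar>B\<bar> / 2) (e * \<bar>B\<bar> / L)"
  have "\<epsilon> > 0" using \<open>e > 0\<close> \<open>B \<noteq> 0\<close> \<open>L > 0\<close> by (simp add: \<epsilon>_def)
  have \<epsilon>_le: "\<epsilon> \<le> \<bar>B\<bar> / 2" "\<epsilon> \<le> e * \<bar>B\<bar> / L"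
    unfolding \<epsilon>_def by (rule min.cobounded1, rule min.cobounded2)
  obtain d1 where "d1 > 0" and lin: "\<And>q. norm (q - (s, g s)) < d1 \<Longrightarrow>
      norm (\<phi> q - \<phi> (s, g s) - (A * fst (q - (s, g s)) + B * snd (q - (s, g s))))
        \<le> \<epsilon> * norm (q - (s, g s))"
    using \<phi> \<open>\<epsilon> > 0\<close> unfolding has_derivative_at_alt by blast
  have "\<forall>\<^sub>F t in nhds s. dist (g t) (g s) < d1 / 2"
    using \<open>isCont g s\<close> \<open>d1 > 0\<close> by (intro tendstoD) (auto simp: isCont_def tendsto_at_iff_tendsto_nhds)
  moreover have "\<forall>\<^sub>F t in nhds s. dist t s < d1 / 2"
    unfolding eventually_nhds_metric using \<open>d1 > 0\<close> by (intro exI[of _ "d1 / 2"]) auto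
  ultimately have "\<forall>\<^sub>F t in nhds s. dist (g t) (g s) < d1 / 2 \<and> \<phi> (t, g t) = 0 \<and> dist t s < d1 / 2"
    using zero by eventually_elim auto
  then obtain d where "d > 0" and near: "\<And>t. dist t s < d \<Longrightarrow>
      dist (g t) (g s) < d1 / 2 \<and> \<phi> (t, g t) = 0 \<and> dist t s < d1 / 2"
    unfolding eventually_nhds_metric by blast
  have "\<phi> (s, g s) = 0" using near[of s] \<open>d > 0\<close> by simp
  show "\<exists>d>0. \<forall>t. norm (t - s) < d \<longrightarrow> norm (g t - g s - - A / B * (t - s)) \<le> e * norm (t - s)"
  proof (intro exI[of _ d] conjI allI impI)
    fix t assume "norm (t - s) < d"
    then have t: "\<bar>g t - g s\<bar> < d1 / 2" "\<phi> (t, g t) = 0" "\<bar>t - s\<bar> < d1 / 2"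
      using near[of t] by (auto simp: dist_real_def)
    have norm_le: "norm (t - s, g t - g s) \<le> \<bar>t - s\<bar> + \<bar>g t - g s\<bar>"
      using sqrt_sum_squares_le_sum_abs[of "t - s" "g t - g s"] by (simp add: norm_Pair)
    have "\<bar>A * (t - s) + B * (g t - g s)\<bar> \<le> \<epsilon> * norm (t - s, g t - g s)"
      using lin[of "(t, g t)"] norm_le t \<open>\<phi> (s, g s) = 0\<close> by simp
    also have "\<dots> \<le> \<epsilon> * (\<bar>t - s\<bar> + \<bar>g t - g s\<bar>)"
      using norm_le \<open>\<epsilon> > 0\<close> by (simp add: mult_left_mono)
    finally have "\<bar>A * (t - s) + B * (g t - g s)\<bar> \<le> \<epsilon> * (\<bar>t - s\<bar> + \<bar>g t - g s\<bar>)" .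
    then have "\<bar>B\<bar> * \<bar>g t - g s - - A / B * (t - s)\<bar> \<le> \<epsilon> * (L * \<bar>t - s\<bar>)"
      unfolding L_def using \<open>B \<noteq> 0\<close> \<open>\<epsilon> > 0\<close> \<epsilon>_le by (intro perturbed_linear_equation_bound) auto
    also have "\<dots> \<le> e * \<bar>B\<bar> / L * (L * \<bar>t - s\<bar>)"
      using \<open>L > 0\<close> \<epsilon>_le by (intro mult_right_mono) auto
    also have "\<dots> = \<bar>B\<bar> * (e * \<bar>t - s\<bar>)" using \<open>L > 0\<close> by (simp add: field_simps)
    finally show "norm (g t - g s - - A / B * (t - s)) \<le> e * norm (t - s)"
      using \<open>B \<noteq> 0\<close> by simp
  qed (use \<open>d > 0\<close> in auto)
qed

lemma continuous_on_zero_curve: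
  fixes \<phi> :: "real \<times> real \<Rightarrow> real" and g :: "real \<Rightarrow> real"
  assumes "open I"
    and cont: "continuous_on (I \<times> {\<alpha>..\<beta>}) \<phi>"
    and mono: "\<And>s t1 t2. s \<in> I \<Longrightarrow> \<alpha> \<le> t1 \<Longrightarrow> t1 < t2 \<Longrightarrow> t2 \<le> \<beta> \<Longrightarrow> \<phi> (s, t1) < \<phi> (s, t2)"
    and g: "\<And>s. s \<in> I \<Longrightarrow> g s \<in> {\<alpha><..<\<beta>} \<and> \<phi> (s, g s) = 0"
  shows "continuous_on I g"
proof -
  have cont_s: "isCont (\<lambda>s. \<phi> (s, t)) s" if "s \<in> I" "t \<in> {\<alpha>..\<beta>}" for s t
  proof -
    have "continuous_on I (\<lambda>s. \<phi> (s, t))"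
      using that by (intro continuous_on_compose2[OF cont]) (auto intro!: continuous_intros)
    then show ?thesis using \<open>open I\<close> \<open>s \<in> I\<close> continuous_on_eq_continuous_at by blast
  qed
  have "isCont g s" if "s \<in> I" for s
    unfolding isCont_def tendsto_at_iff_tendsto_nhds
  proof (rule tendstoI)
    fix \<epsilon> :: real assume "\<epsilon> > 0"
    define \<epsilon>' where "\<epsilon>' = min \<epsilon> (min (g s - \<alpha>) (\<beta> - g s))"
    have \<epsilon>': "\<epsilon>' > 0" "\<epsilon>' \<le> \<epsilon>" "\<alpha> \<le> g s - \<epsilon>'" "g s + \<epsilon>' \<le> \<beta>"
      using \<open>\<epsilon> > 0\<close> g[OF that] by (auto simp: \<epsilon>'_def)
    have "\<phi> (s, g s - \<epsilon>') < 0" "0 < \<phi> (s, g s + \<epsilon>')"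
      using mono[OF that, of "g s - \<epsilon>'" "g s"] mono[OF that, of "g s" "g s + \<epsilon>'"] g[OF that] \<epsilon>'
      by auto
    then have "\<forall>\<^sub>F s' in nhds s. s' \<in> I \<and> \<phi> (s', g s - \<epsilon>') < 0 \<and> 0 < \<phi> (s', g s + \<epsilon>')"
      using cont_s[OF that, of "g s - \<epsilon>'"] cont_s[OF that, of "g s + \<epsilon>'"] \<epsilon>' g[OF that]
        \<open>open I\<close> \<open>s \<in> I\<close>
      by (intro eventually_conj eventually_nhds_in_open order_tendstoD)
         (auto simp: isCont_def tendsto_nhds_iff)
    then show "\<forall>\<^sub>F s' in nhds s. dist (g s') (g s) < \<epsilon>"
    proof (rule eventually_mono)
      fix s' assume s': "s' \<in> I \<and> \<phi> (s', g s - \<epsilon>') < 0 \<and> 0 < \<phi> (s', g s + \<epsilon>')"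
      have gs': "g s' \<in> {\<alpha><..<\<beta>}" "\<phi> (s', g s') = 0" using g s' by auto
      have "g s - \<epsilon>' < g s'"
      proof (rule ccontr)
        assume "\<not> ?thesis"
        then have "\<phi> (s', g s') \<le> \<phi> (s', g s - \<epsilon>')"
          using mono[of s' "g s'" "g s - \<epsilon>'"] gs' s' \<epsilon>' by (cases "g s' = g s - \<epsilon>'") auto
        then show False using s' gs' by simp
      qed
      moreover have "g s' < g s + \<epsilon>'"
      proof (rule ccontr)
        assume "\<not> ?thesis"
        then have "\<phi> (s', g s + \<epsilon>') \<le> \<phi> (s', g s')"
          using mono[of s' "g s + \<epsilon>'" "g s'"] gs' s' \<epsilon>' by (cases "g s' = g s + \<epsilon>'") auto
        then show False using s' gs' by simp
      qed
      ultimately show "dist (g s') (g s) < \<epsilon>" using \<epsilon>' by (simp add: dist_real_def abs_less_iff)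
    qed
  qed
  then show ?thesis by (simp add: continuous_at_imp_continuous_on)
qed

lemma continuous_parametric_zero:
  fixes \<phi> :: "real \<times> real \<Rightarrow> real"
  assumes "open I" "\<alpha> < \<beta>"
    and cont: "continuous_on (I \<times> {\<alpha>..\<beta>}) \<phi>"
    and mono: "\<And>s t1 t2. s \<in> I \<Longrightarrow> \<alpha> \<le> t1 \<Longrightarrow> t1 < t2 \<Longrightarrow> t2 \<le> \<beta> \<Longrightarrow> \<phi> (s, t1) < \<phi> (s, t2)"
    and sign: "\<And>s. s \<in> I \<Longrightarrow> \<phi> (s, \<alpha>) < 0 \<and> 0 < \<phi> (s, \<beta>)"
  obtains g where "\<And>s t. s \<in> I \<Longrightarrow> t \<in> {\<alpha>..\<beta>} \<Longrightarrow> \<phi> (s, t) = 0 \<longleftrightarrow> t = g s"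
    and "\<And>s. s \<in> I \<Longrightarrow> g s \<in> {\<alpha><..<\<beta>}"
    and "continuous_on I g"
proof -
  have zero: "\<exists>!t. t \<in> {\<alpha>..\<beta>} \<and> \<phi> (s, t) = 0" if s: "s \<in> I" for s
  proof -
    have "continuous_on {\<alpha>..\<beta>} (\<lambda>t. \<phi> (s, t))"
      using s by (intro continuous_on_compose2[OF cont]) (auto intro!: continuous_intros)
    then obtain t where "\<alpha> \<le> t" "t \<le> \<beta>" "\<phi> (s, t) = 0"
      using IVT'[of "\<lambda>t. \<phi> (s, t)" \<alpha> 0 \<beta>] sign[OF s] \<open>\<alpha> < \<beta>\<close> by auto
    then show ?thesis using mono[OF s] by (auto intro!: ex1I[of _ t]) (metis less_irrefl neq_iff)
  qed
  define g where "g s = (THE t. t \<in> {\<alpha>..\<beta>} \<and> \<phi> (s, t) = 0)" for s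
  have g: "g s \<in> {\<alpha>..\<beta>} \<and> \<phi> (s, g s) = 0" if "s \<in> I" for s
    using theI'[OF zero[OF that]] by (simp add: g_def)
  have g_iff: "\<phi> (s, t) = 0 \<longleftrightarrow> t = g s" if "s \<in> I" "t \<in> {\<alpha>..\<beta>}" for s t
    using g[OF that(1)] zero[OF that(1)] that(2) by blast
  have g_open: "g s \<in> {\<alpha><..<\<beta>}" if "s \<in> I" for s
    using g[OF that] sign[OF that] by (auto simp: le_less)
  have "continuous_on I g"
    using g g_open by (intro continuous_on_zero_curve[OF \<open>open I\<close> cont mono]) auto
  then show ?thesis using that g_iff g_open by blast
qed

lemma increasing_in_snd_near:
  fixes \<phi> \<phi>y :: "real \<times> real \<Rightarrow> real"
  assumes "open W" "(x0, y0) \<in> W"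
    and \<phi>y: "\<And>q. q \<in> W \<Longrightarrow> DERIV (\<lambda>t. \<phi> (fst q, t)) (snd q) :> \<phi>y q"
    and "continuous_on W \<phi>y" "\<phi>y (x0, y0) > 0"
  obtains \<eta> where "\<eta> > 0"
    and "\<And>s t. \<bar>s - x0\<bar> \<le> \<eta> \<Longrightarrow> \<bar>t - y0\<bar> \<le> \<eta> \<Longrightarrow> (s, t) \<in> W \<and> 0 < \<phi>y (s, t)"
    and "\<And>s t1 t2. \<bar>s - x0\<bar> \<le> \<eta> \<Longrightarrow> y0 - \<eta> \<le> t1 \<Longrightarrow> t1 < t2 \<Longrightarrow> t2 \<le> y0 + \<eta> \<Longrightarrow>
           \<phi> (s, t1) < \<phi> (s, t2)"
proof -
  have "\<forall>\<^sub>F q in nhds (x0, y0). q \<in> W \<and> 0 < \<phi>y q"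
    using assms(1,2,4,5)
    by (intro eventually_conj eventually_nhds_in_open order_tendstoD)
       (auto simp: continuous_on_eq_continuous_at isCont_def tendsto_nhds_iff)
  then obtain r where "r > 0" and r: "\<And>q. dist q (x0, y0) < r \<Longrightarrow> q \<in> W \<and> 0 < \<phi>y q"
    unfolding eventually_nhds_metric by blast
  define \<eta> where "\<eta> = r / 3"
  have "\<eta> > 0" using \<open>r > 0\<close> by (simp add: \<eta>_def)
  have box: "(s, t) \<in> W \<and> 0 < \<phi>y (s, t)" if "\<bar>s - x0\<bar> \<le> \<eta>" "\<bar>t - y0\<bar> \<le> \<eta>" for s t
    using r dist_Pair_le_sum_abs[of s t x0 y0] that \<open>r > 0\<close> by (simp add: \<eta>_def)
  have mono: "\<phi> (s, t1) < \<phi> (s, t2)"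
    if "\<bar>s - x0\<bar> \<le> \<eta>" "y0 - \<eta> \<le> t1" "t1 < t2" "t2 \<le> y0 + \<eta>" for s t1 t2
  proof (rule DERIV_pos_imp_increasing[of t1 t2 "\<lambda>t. \<phi> (s, t)"])
    fix t assume "t1 \<le> t" "t \<le> t2"
    then have "(s, t) \<in> W \<and> 0 < \<phi>y (s, t)" using that by (intro box) (auto simp: abs_le_iff)
    then show "\<exists>y. DERIV (\<lambda>t. \<phi> (s, t)) t :> y \<and> y > 0" using \<phi>y[of "(s, t)"] by auto
  qed (use that in simp)
  show thesis using \<open>\<eta> > 0\<close> box mono by (rule that)
qed

lemma implicit_function_continuous:
  fixes \<phi> \<phi>y :: "real \<times> real \<Rightarrow> real"
  assumes "open W" "(x0, y0) \<in> W"
    and \<phi>y: "\<And>q. q \<in> W \<Longrightarrow> DERIV (\<lambda>t. \<phi> (fst q, t)) (snd q) :> \<phi>y q"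
    and cont: "continuous_on W \<phi>" "continuous_on W \<phi>y"
    and "\<phi> (x0, y0) = 0" "\<phi>y (x0, y0) > 0"
  obtains \<delta> \<eta> g where "\<delta> > 0" "\<eta> > 0" "{x0 - \<delta><..<x0 + \<delta>} \<times> {y0 - \<eta>..y0 + \<eta>} \<subseteq> W"
    and "\<And>s t. s \<in> {x0 - \<delta><..<x0 + \<delta>} \<Longrightarrow> t \<in> {y0 - \<eta>..y0 + \<eta>} \<Longrightarrow> 0 < \<phi>y (s, t)"
    and "\<And>s t. s \<in> {x0 - \<delta><..<x0 + \<delta>} \<Longrightarrow> t \<in> {y0 - \<eta>..y0 + \<eta>} \<Longrightarrow> \<phi> (s, t) = 0 \<longleftrightarrow> t = g s"
    and "\<And>s. s \<in> {x0 - \<delta><..<x0 + \<delta>} \<Longrightarrow> g s \<in> {y0 - \<eta><..<y0 + \<eta>}"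
    and "continuous_on {x0 - \<delta><..<x0 + \<delta>} g"
proof -
  obtain \<eta> where "\<eta> > 0" and box: "\<And>s t. \<bar>s - x0\<bar> \<le> \<eta> \<Longrightarrow> \<bar>t - y0\<bar> \<le> \<eta> \<Longrightarrow> (s, t) \<in> W \<and> 0 < \<phi>y (s, t)"
    and mono: "\<And>s t1 t2. \<bar>s - x0\<bar> \<le> \<eta> \<Longrightarrow> y0 - \<eta> \<le> t1 \<Longrightarrow> t1 < t2 \<Longrightarrow> t2 \<le> y0 + \<eta> \<Longrightarrow>
                \<phi> (s, t1) < \<phi> (s, t2)"
    using increasing_in_snd_near[OF assms(1,2) \<phi>y cont(2) \<open>\<phi>y (x0, y0) > 0\<close>] by blast
  have ends: "\<phi> (x0, y0 - \<eta>) < 0" "0 < \<phi> (x0, y0 + \<eta>)"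
    using mono[of x0 "y0 - \<eta>" y0] mono[of x0 y0 "y0 + \<eta>"] \<open>\<eta> > 0\<close> \<open>\<phi> (x0, y0) = 0\<close> by auto
  have side: "((\<lambda>s. \<phi> (s, y0 + c)) \<longlongrightarrow> \<phi> (x0, y0 + c)) (nhds x0)" if "\<bar>c\<bar> \<le> \<eta>" for c
  proof -
    have "isCont \<phi> (x0, y0 + c)"
      using cont(1) assms(1) box[of x0 "y0 + c"] that \<open>\<eta> > 0\<close> continuous_on_eq_continuous_at by auto
    then have "isCont (\<lambda>s. \<phi> (s, y0 + c)) x0"
      using isCont_o2[where f = "\<lambda>s. (s, y0 + c)" and g = \<phi> and a = x0] by simp
    then show ?thesis by (simp add: isCont_def tendsto_nhds_iff)
  qed
  have "\<forall>\<^sub>F s in nhds x0. \<phi> (s, y0 - \<eta>) < 0 \<and> 0 < \<phi> (s, y0 + \<eta>) \<and> dist s x0 < \<eta>"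
    using order_tendstoD(2)[OF side[of "- \<eta>"]] order_tendstoD(1)[OF side[of \<eta>]] ends \<open>\<eta> > 0\<close>
      eventually_nhds_metric[of "\<lambda>s. dist s x0 < \<eta>"]
    by (intro eventually_conj) auto
  then obtain \<delta> where "\<delta> > 0"
    and \<delta>: "\<And>s. dist s x0 < \<delta> \<Longrightarrow> \<phi> (s, y0 - \<eta>) < 0 \<and> 0 < \<phi> (s, y0 + \<eta>) \<and> dist s x0 < \<eta>"
    unfolding eventually_nhds_metric by blast
  define I where "I = {x0 - \<delta><..<x0 + \<delta>}"
  have I: "\<bar>s - x0\<bar> < \<eta>" if "s \<in> I" for s
    using \<delta>[of s] that by (auto simp: I_def dist_real_def abs_less_iff)
  have IW: "I \<times> {y0 - \<eta>..y0 + \<eta>} \<subseteq> W" using box I by (force simp: abs_le_iff)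
  have pos: "0 < \<phi>y (s, t)" if "s \<in> I" "t \<in> {y0 - \<eta>..y0 + \<eta>}" for s t
    using box I that by (force simp: abs_le_iff)
  have "open I" "y0 - \<eta> < y0 + \<eta>" using \<open>\<eta> > 0\<close> by (auto simp: I_def)
  moreover have "continuous_on (I \<times> {y0 - \<eta>..y0 + \<eta>}) \<phi>" by (rule continuous_on_subset[OF cont(1) IW])
  moreover have "\<phi> (s, t1) < \<phi> (s, t2)" if "s \<in> I" "y0 - \<eta> \<le> t1" "t1 < t2" "t2 \<le> y0 + \<eta>" for s t1 t2
    using mono I that by force
  moreover have "\<phi> (s, y0 - \<eta>) < 0 \<and> 0 < \<phi> (s, y0 + \<eta>)" if "s \<in> I" for s
    using \<delta> that by (auto simp: I_def dist_real_def abs_less_iff)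
  ultimately obtain g where "\<And>s t. s \<in> I \<Longrightarrow> t \<in> {y0 - \<eta>..y0 + \<eta>} \<Longrightarrow> \<phi> (s, t) = 0 \<longleftrightarrow> t = g s"
    and "\<And>s. s \<in> I \<Longrightarrow> g s \<in> {y0 - \<eta><..<y0 + \<eta>}" and "continuous_on I g"
    using continuous_parametric_zero[of I "y0 - \<eta>" "y0 + \<eta>" \<phi>] by blast
  with \<open>\<delta> > 0\<close> \<open>\<eta> > 0\<close> IW pos show thesis by (intro that[of \<delta> \<eta> g]) (simp_all add: I_def)
qed

lemma implicit_function:
  fixes \<phi> \<phi>x \<phi>y :: "real \<times> real \<Rightarrow> real"
  assumes "open W" "(x0, y0) \<in> W"
    and \<phi>x: "\<And>q. q \<in> W \<Longrightarrow> DERIV (\<lambda>t. \<phi> (t, snd q)) (fst q) :> \<phi>x q"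
    and \<phi>y: "\<And>q. q \<in> W \<Longrightarrow> DERIV (\<lambda>t. \<phi> (fst q, t)) (snd q) :> \<phi>y q"
    and cont: "continuous_on W \<phi>" "continuous_on W \<phi>x" "continuous_on W \<phi>y"
    and "\<phi> (x0, y0) = 0" "\<phi>y (x0, y0) > 0"
  obtains \<delta> \<eta> g where "\<delta> > 0" "\<eta> > 0" "{x0 - \<delta><..<x0 + \<delta>} \<times> {y0 - \<eta>..y0 + \<eta>} \<subseteq> W"
    and "\<And>s t. s \<in> {x0 - \<delta><..<x0 + \<delta>} \<Longrightarrow> t \<in> {y0 - \<eta>..y0 + \<eta>} \<Longrightarrow> \<phi> (s, t) = 0 \<longleftrightarrow> t = g s"
    and "\<And>s. s \<in> {x0 - \<delta><..<x0 + \<delta>} \<Longrightarrow> g s \<in> {y0 - \<eta><..<y0 + \<eta>}"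
    and "\<And>s. s \<in> {x0 - \<delta><..<x0 + \<delta>} \<Longrightarrow> DERIV g s :> - \<phi>x (s, g s) / \<phi>y (s, g s)"
    and "continuous_on {x0 - \<delta><..<x0 + \<delta>} (\<lambda>s. - \<phi>x (s, g s) / \<phi>y (s, g s))"
proof -
  obtain \<delta> \<eta> g where "\<delta> > 0" "\<eta> > 0" and IW: "{x0 - \<delta><..<x0 + \<delta>} \<times> {y0 - \<eta>..y0 + \<eta>} \<subseteq> W"
    and pos: "\<And>s t. s \<in> {x0 - \<delta><..<x0 + \<delta>} \<Longrightarrow> t \<in> {y0 - \<eta>..y0 + \<eta>} \<Longrightarrow> 0 < \<phi>y (s, t)"
    and g_iff: "\<And>s t. s \<in> {x0 - \<delta><..<x0 + \<delta>} \<Longrightarrow> t \<in> {y0 - \<eta>..y0 + \<eta>} \<Longrightarrow> \<phi> (s, t) = 0 \<longleftrightarrow> t = g s"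
    and g: "\<And>s. s \<in> {x0 - \<delta><..<x0 + \<delta>} \<Longrightarrow> g s \<in> {y0 - \<eta><..<y0 + \<eta>}"
    and "continuous_on {x0 - \<delta><..<x0 + \<delta>} g"
    using implicit_function_continuous[OF assms(1,2) \<phi>y cont(1,3) assms(8,9)] by blast
  define I where "I = {x0 - \<delta><..<x0 + \<delta>}"
  have graph_W: "(s, g s) \<in> W" and graph_pos: "0 < \<phi>y (s, g s)" if "s \<in> I" for s
    using IW pos[of s "g s"] g[of s] that by (auto simp: I_def)
  have deriv: "DERIV g s :> - \<phi>x (s, g s) / \<phi>y (s, g s)" if "s \<in> I" for s
  proof (rule has_field_derivative_implicit)
    show "(\<phi> has_derivative (\<lambda>h. \<phi>x (s, g s) * fst h + \<phi>y (s, g s) * snd h)) (at (s, g s))"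
      using \<phi>x \<phi>y graph_W[OF that] cont(3) assms(1)
      by (intro has_derivative_of_partials[of W]) (auto simp: continuous_on_eq_continuous_at)
    show "\<phi>y (s, g s) \<noteq> 0" using graph_pos[OF that] by simp
    show "isCont g s"
      using \<open>continuous_on {x0 - \<delta><..<x0 + \<delta>} g\<close> that by (simp add: I_def continuous_on_eq_continuous_at)
    have "\<forall>\<^sub>F t in nhds s. t \<in> I" using that by (intro eventually_nhds_in_open) (auto simp: I_def)
    then show "\<forall>\<^sub>F t in nhds s. \<phi> (t, g t) = 0"
      by (rule eventually_mono) (use g g_iff in \<open>auto simp: I_def less_imp_le\<close>)
  qed
  have "continuous_on I g" using \<open>continuous_on {x0 - \<delta><..<x0 + \<delta>} g\<close> by (simp add: I_def)
  then have deriv_cont: "continuous_on I (\<lambda>s. - \<phi>x (s, g s) / \<phi>y (s, g s))"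
    using graph_W graph_pos
    by (intro continuous_intros continuous_on_compose2[OF cont(2)] continuous_on_compose2[OF cont(3)])
       (auto dest: less_imp_neq[symmetric])
  show thesis
    using that[of \<delta> \<eta> g] \<open>\<delta> > 0\<close> \<open>\<eta> > 0\<close> IW g_iff g deriv deriv_cont by (simp add: I_def)
qed

lemma C1_arc_through_graph:
  fixes g g' :: "real \<Rightarrow> real"
  assumes "a < x0" "x0 < b"
    and g: "\<And>s. s \<in> {a<..<b} \<Longrightarrow> DERIV g s :> g' s" and "continuous_on {a<..<b} g'"
  shows "C1_arc_through ((\<lambda>s. (s, g s)) ` {a<..<b}) (x0, g x0)"
  unfolding C1_arc_through_def
proof (intro exI conjI)
  let ?\<gamma> = "\<lambda>t. (x0 + t, g (x0 + t))" and ?\<gamma>' = "\<lambda>t. (1::real, g' (x0 + t))"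
  show "a - x0 < 0" "0 < b - x0" using assms(1,2) by simp_all
  show "\<forall>t\<in>{a - x0<..<b - x0}. (?\<gamma> has_vector_derivative ?\<gamma>' t) (at t) \<and> ?\<gamma>' t \<noteq> 0"
  proof
    fix t assume "t \<in> {a - x0<..<b - x0}"
    then have "DERIV g (x0 + t) :> g' (x0 + t)" by (intro g) simp
    then have "DERIV (\<lambda>t. g (x0 + t)) t :> g' (x0 + t) * 1"
      by (rule DERIV_chain2) (auto intro!: derivative_eq_intros)
    then show "(?\<gamma> has_vector_derivative ?\<gamma>' t) (at t) \<and> ?\<gamma>' t \<noteq> 0"
      by (auto intro!: has_vector_derivative_Pair derivative_eq_intros
          simp: has_real_derivative_iff_has_vector_derivative[symmetric] zero_prod_def)
  qed
  show "continuous_on {a - x0<..<b - x0} ?\<gamma>'"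
    by (intro continuous_intros continuous_on_compose2[OF \<open>continuous_on {a<..<b} g'\<close>]) auto
  show "inj_on ?\<gamma> {a - x0<..<b - x0}" by (rule inj_onI) simp
  show "?\<gamma> 0 = (x0, g x0)" by simp
  have "{a<..<b} = (\<lambda>t. x0 + t) ` {a - x0<..<b - x0}"
  proof (intro set_eqI iffI)
    fix s assume "s \<in> {a<..<b}"
    then show "s \<in> (\<lambda>t. x0 + t) ` {a - x0<..<b - x0}" by (intro image_eqI[of _ _ "s - x0"]) auto
  qed auto
  then show "(\<lambda>s. (s, g s)) ` {a<..<b} = ?\<gamma> ` {a - x0<..<b - x0}" by (simp add: image_image)
qed

lemma C1_arc_through_swap:
  assumes "C1_arc_through \<Gamma> p"
  shows "C1_arc_through (prod.swap ` \<Gamma>) (prod.swap p)"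
proof -
  obtain \<gamma> \<gamma>' a b where "a < 0" "0 < b"
    and der: "\<forall>t\<in>{a<..<b}. (\<gamma> has_vector_derivative \<gamma>' t) (at t) \<and> \<gamma>' t \<noteq> 0"
    and "continuous_on {a<..<b} \<gamma>'" "inj_on \<gamma> {a<..<b}" "\<gamma> 0 = p" "\<Gamma> = \<gamma> ` {a<..<b}"
    using assms unfolding C1_arc_through_def by blast
  have "((\<lambda>t. prod.swap (\<gamma> t)) has_vector_derivative prod.swap (\<gamma>' t)) (at t)"
    if "t \<in> {a<..<b}" for t
    using bounded_linear.has_vector_derivative[OF bounded_linear_snd, of \<gamma> "\<gamma>' t" "at t"]
      bounded_linear.has_vector_derivative[OF bounded_linear_fst, of \<gamma> "\<gamma>' t" "at t"] der that
    by (auto simp: prod.swap_def intro: has_vector_derivative_Pair)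
  moreover have "prod.swap (\<gamma>' t) \<noteq> 0" if "t \<in> {a<..<b}" for t
    using der that by (auto simp: zero_prod_def prod.swap_def prod_eq_iff)
  moreover have "continuous_on {a<..<b} (\<lambda>t. prod.swap (\<gamma>' t))"
    by (rule continuous_on_compose2[OF continuous_on_swap \<open>continuous_on {a<..<b} \<gamma>'\<close>]) auto
  moreover have "inj_on (\<lambda>t. prod.swap (\<gamma> t)) {a<..<b}"
    using \<open>inj_on \<gamma> {a<..<b}\<close> unfolding inj_on_def by (metis swap_swap)
  ultimately show ?thesis
    unfolding C1_arc_through_def using \<open>a < 0\<close> \<open>0 < b\<close> \<open>\<gamma> 0 = p\<close> \<open>\<Gamma> = \<gamma> ` {a<..<b}\<close>
    by (intro exI[of _ "\<lambda>t. prod.swap (\<gamma> t)"] exI[of _ "\<lambda>t. prod.swap (\<gamma>' t)"] exI[of _ a] exI[of _ b])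
       (auto simp: image_image)
qed

lemma zero_set_C1_arc_snd_pos:
  fixes \<phi> \<phi>x \<phi>y :: "real \<times> real \<Rightarrow> real"
  assumes "open W" "p \<in> W"
    and \<phi>x: "\<And>q. q \<in> W \<Longrightarrow> DERIV (\<lambda>t. \<phi> (t, snd q)) (fst q) :> \<phi>x q"
    and \<phi>y: "\<And>q. q \<in> W \<Longrightarrow> DERIV (\<lambda>t. \<phi> (fst q, t)) (snd q) :> \<phi>y q"
    and cont: "continuous_on W \<phi>" "continuous_on W \<phi>x" "continuous_on W \<phi>y"
    and "\<phi> p = 0" and pos: "\<phi>y p > 0"
  shows "\<exists>V. open V \<and> p \<in> V \<and> V \<subseteq> W \<and> C1_arc_through (V \<inter> {q. \<phi> q = 0}) p"
proof -
  obtain x0 y0 where p: "p = (x0, y0)" by (cases p)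
  obtain \<delta> \<eta> g where "\<delta> > 0" "\<eta> > 0" and box: "{x0 - \<delta><..<x0 + \<delta>} \<times> {y0 - \<eta>..y0 + \<eta>} \<subseteq> W"
    and g_iff: "\<And>s t. s \<in> {x0 - \<delta><..<x0 + \<delta>} \<Longrightarrow> t \<in> {y0 - \<eta>..y0 + \<eta>} \<Longrightarrow> \<phi> (s, t) = 0 \<longleftrightarrow> t = g s"
    and g: "\<And>s. s \<in> {x0 - \<delta><..<x0 + \<delta>} \<Longrightarrow> g s \<in> {y0 - \<eta><..<y0 + \<eta>}"
    and g': "\<And>s. s \<in> {x0 - \<delta><..<x0 + \<delta>} \<Longrightarrow> DERIV g s :> - \<phi>x (s, g s) / \<phi>y (s, g s)"
    and "continuous_on {x0 - \<delta><..<x0 + \<delta>} (\<lambda>s. - \<phi>x (s, g s) / \<phi>y (s, g s))"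
    using implicit_function[OF \<open>open W\<close> _ \<phi>x \<phi>y cont] \<open>p \<in> W\<close> \<open>\<phi> p = 0\<close> pos p by blast
  define V where "V = {x0 - \<delta><..<x0 + \<delta>} \<times> {y0 - \<eta><..<y0 + \<eta>}"
  have "g x0 = y0" using g_iff[of x0 y0] \<open>\<phi> p = 0\<close> p \<open>\<delta> > 0\<close> \<open>\<eta> > 0\<close> by simp
  have "V \<inter> {q. \<phi> q = 0} = (\<lambda>s. (s, g s)) ` {x0 - \<delta><..<x0 + \<delta>}"
  proof (intro set_eqI iffI)
    fix q assume "q \<in> V \<inter> {q. \<phi> q = 0}"
    then show "q \<in> (\<lambda>s. (s, g s)) ` {x0 - \<delta><..<x0 + \<delta>}"
      using g_iff[of "fst q" "snd q"] by (force simp: V_def)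
  next
    fix q assume "q \<in> (\<lambda>s. (s, g s)) ` {x0 - \<delta><..<x0 + \<delta>}"
    then show "q \<in> V \<inter> {q. \<phi> q = 0}"
      using g_iff g by (force simp: V_def)
  qed
  moreover have "C1_arc_through ((\<lambda>s. (s, g s)) ` {x0 - \<delta><..<x0 + \<delta>}) p"
    using C1_arc_through_graph[of "x0 - \<delta>" x0 "x0 + \<delta>" g "\<lambda>s. - \<phi>x (s, g s) / \<phi>y (s, g s)"]
      g' \<open>\<delta> > 0\<close> \<open>g x0 = y0\<close> p
      \<open>continuous_on {x0 - \<delta><..<x0 + \<delta>} (\<lambda>s. - \<phi>x (s, g s) / \<phi>y (s, g s))\<close> by simp
  moreover have "open V" "p \<in> V" "V \<subseteq> W"
    using p \<open>\<delta> > 0\<close> \<open>\<eta> > 0\<close> box by (auto simp: V_def open_Times)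
  ultimately show ?thesis using p by (intro exI[of _ V]) simp
qed

lemma zero_set_C1_arc_snd:
  fixes \<phi> \<phi>x \<phi>y :: "real \<times> real \<Rightarrow> real"
  assumes "open W" "p \<in> W"
    and \<phi>x: "\<And>q. q \<in> W \<Longrightarrow> DERIV (\<lambda>t. \<phi> (t, snd q)) (fst q) :> \<phi>x q"
    and \<phi>y: "\<And>q. q \<in> W \<Longrightarrow> DERIV (\<lambda>t. \<phi> (fst q, t)) (snd q) :> \<phi>y q"
    and cont: "continuous_on W \<phi>" "continuous_on W \<phi>x" "continuous_on W \<phi>y"
    and "\<phi> p = 0" "\<phi>y p \<noteq> 0"
  shows "\<exists>V. open V \<and> p \<in> V \<and> V \<subseteq> W \<and> C1_arc_through (V \<inter> {q. \<phi> q = 0}) p"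
proof (cases "\<phi>y p > 0")
  case True
  show ?thesis by (rule zero_set_C1_arc_snd_pos[OF assms(1,2) \<phi>x \<phi>y cont \<open>\<phi> p = 0\<close> True])
next
  case False
  have "\<exists>V. open V \<and> p \<in> V \<and> V \<subseteq> W \<and> C1_arc_through (V \<inter> {q. - \<phi> q = 0}) p"
    using False \<open>\<phi>y p \<noteq> 0\<close> \<phi>x \<phi>y cont \<open>\<phi> p = 0\<close> \<open>open W\<close> \<open>p \<in> W\<close>
    by (intro zero_set_C1_arc_snd_pos[of W p "\<lambda>q. - \<phi> q" "\<lambda>q. - \<phi>x q" "\<lambda>q. - \<phi>y q"])
       (auto intro!: DERIV_minus continuous_intros)
  then show ?thesis by simp
qed

lemma zero_set_C1_arc:
  fixes \<phi> \<phi>x \<phi>y :: "real \<times> real \<Rightarrow> real"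
  assumes "open W" "p \<in> W"
    and \<phi>x: "\<And>q. q \<in> W \<Longrightarrow> DERIV (\<lambda>t. \<phi> (t, snd q)) (fst q) :> \<phi>x q"
    and \<phi>y: "\<And>q. q \<in> W \<Longrightarrow> DERIV (\<lambda>t. \<phi> (fst q, t)) (snd q) :> \<phi>y q"
    and cont: "continuous_on W \<phi>" "continuous_on W \<phi>x" "continuous_on W \<phi>y"
    and "\<phi> p = 0" "\<phi>x p \<noteq> 0 \<or> \<phi>y p \<noteq> 0"
  shows "\<exists>V. open V \<and> p \<in> V \<and> V \<subseteq> W \<and> C1_arc_through (V \<inter> {q. \<phi> q = 0}) p"
proof (cases "\<phi>y p \<noteq> 0")
  case True
  show ?thesis by (rule zero_set_C1_arc_snd[OF assms(1,2) \<phi>x \<phi>y cont \<open>\<phi> p = 0\<close> True])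
next
  case False
  define W' where "W' = prod.swap -` W"
  have "\<exists>V'. open V' \<and> prod.swap p \<in> V' \<and> V' \<subseteq> W'
          \<and> C1_arc_through (V' \<inter> {q. \<phi> (prod.swap q) = 0}) (prod.swap p)"
  proof (rule zero_set_C1_arc_snd[where \<phi>x = "\<lambda>q. \<phi>y (prod.swap q)" and \<phi>y = "\<lambda>q. \<phi>x (prod.swap q)"])
    show "open W'" unfolding W'_def by (intro open_vimage \<open>open W\<close> continuous_intros)
    show "prod.swap p \<in> W'" using \<open>p \<in> W\<close> by (simp add: W'_def)
    show "DERIV (\<lambda>t. \<phi> (prod.swap (t, snd q))) (fst q) :> \<phi>y (prod.swap q)"
      and "DERIV (\<lambda>t. \<phi> (prod.swap (fst q, t))) (snd q) :> \<phi>x (prod.swap q)" if "q \<in> W'" for q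
      using \<phi>x[of "prod.swap q"] \<phi>y[of "prod.swap q"] that by (cases q; simp add: W'_def)+
    show "continuous_on W' (\<lambda>q. \<phi> (prod.swap q))" "continuous_on W' (\<lambda>q. \<phi>y (prod.swap q))"
      "continuous_on W' (\<lambda>q. \<phi>x (prod.swap q))"
      using cont by (auto simp: W'_def intro!: continuous_on_compose2[OF _ continuous_on_swap])
    show "\<phi> (prod.swap (prod.swap p)) = 0" "\<phi>x (prod.swap (prod.swap p)) \<noteq> 0"
      using \<open>\<phi> p = 0\<close> False \<open>\<phi>x p \<noteq> 0 \<or> \<phi>y p \<noteq> 0\<close> by simp_all
  qed
  then obtain V' where "open V'" "prod.swap p \<in> V'" "V' \<subseteq> W'"
    and arc: "C1_arc_through (V' \<inter> {q. \<phi> (prod.swap q) = 0}) (prod.swap p)" by blast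
  have "prod.swap -` V' \<inter> {q. \<phi> q = 0} = prod.swap ` (V' \<inter> {q. \<phi> (prod.swap q) = 0})"
    by (auto intro: image_eqI[where x = "prod.swap _"])
  then have "C1_arc_through (prod.swap -` V' \<inter> {q. \<phi> q = 0}) p"
    using C1_arc_through_swap[OF arc] by simp
  moreover have "open (prod.swap -` V')" by (intro open_vimage \<open>open V'\<close> continuous_intros)
  ultimately show ?thesis
    using \<open>prod.swap p \<in> V'\<close> \<open>V' \<subseteq> W'\<close> by (intro exI[of _ "prod.swap -` V'"]) (auto simp: W'_def)
qed

section \<open>Zeros of a planar vector field\<close>

lemma quadratic_form_nonzero:
  fixes m11 m12 m21 m22 :: real
  assumes "m11 * m22 - m12 * m21 = 0" "m11 \<noteq> 0 \<or> m12 \<noteq> 0 \<or> m21 \<noteq> 0 \<or> m22 \<noteq> 0"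
  obtains l1 l2 where "l1\<^sup>2 * m11 + l1 * l2 * (m12 + m21) + l2\<^sup>2 * m22 \<noteq> 0"
proof -
  consider "m11 \<noteq> 0" | "m22 \<noteq> 0" | "m11 = 0" "m22 = 0" by blast
  then show thesis
  proof cases
    case 1 then show ?thesis using that[of 1 0] by simp
  next
    case 2 then show ?thesis using that[of 0 1] by simp
  next
    case 3
    then have "m12 + m21 \<noteq> 0" using assms by auto
    then show ?thesis using that[of 1 1] 3 by simp
  qed
qed

text \<open>Hypothesis r says that l is not orthogonal to the image of M = [[m11, m12], [m21, m22]].
  As M has rank at most one, M h is then controlled by its component l \<bullet> M h.\<close>
lemma singular_matrix_bound:
  fixes m11 m12 m21 m22 l1 l2 :: real
  assumes det: "m11 * m22 - m12 * m21 = 0"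
    and r: "(l1 * m11 + l2 * m21)\<^sup>2 + (l1 * m12 + l2 * m22)\<^sup>2 > 0"
  obtains K where "K \<ge> 0"
    and "\<And>h1 h2. \<bar>m11 * h1 + m12 * h2\<bar> + \<bar>m21 * h1 + m22 * h2\<bar>
                   \<le> K * \<bar>l1 * (m11 * h1 + m12 * h2) + l2 * (m21 * h1 + m22 * h2)\<bar>"
proof -
  define r1 where "r1 = l1 * m11 + l2 * m21"
  define r2 where "r2 = l1 * m12 + l2 * m22"
  define N where "N = r1\<^sup>2 + r2\<^sup>2"
  have "N > 0" using r by (simp add: N_def r1_def r2_def)
  show thesis
  proof (rule that[of "(\<bar>m11 * r1 + m12 * r2\<bar> + \<bar>m21 * r1 + m22 * r2\<bar>) / N"])
    show "(\<bar>m11 * r1 + m12 * r2\<bar> + \<bar>m21 * r1 + m22 * r2\<bar>) / N \<ge> 0" using \<open>N > 0\<close> by simp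
    fix h1 h2
    define X where "X = m11 * h1 + m12 * h2"
    define Y where "Y = m21 * h1 + m22 * h2"
    have "X * N = (m11 * r1 + m12 * r2) * (l1 * X + l2 * Y)"
      and "Y * N = (m21 * r1 + m22 * r2) * (l1 * X + l2 * Y)"
      using det unfolding N_def r1_def r2_def X_def Y_def by algebra+
    then have "\<bar>X\<bar> * N = \<bar>m11 * r1 + m12 * r2\<bar> * \<bar>l1 * X + l2 * Y\<bar>"
      and "\<bar>Y\<bar> * N = \<bar>m21 * r1 + m22 * r2\<bar> * \<bar>l1 * X + l2 * Y\<bar>"
      using \<open>N > 0\<close> by (metis abs_mult abs_of_pos)+
    then show "\<bar>X\<bar> + \<bar>Y\<bar>
        \<le> (\<bar>m11 * r1 + m12 * r2\<bar> + \<bar>m21 * r1 + m22 * r2\<bar>) / N * \<bar>l1 * X + l2 * Y\<bar>"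
      using \<open>N > 0\<close> by (simp add: field_simps)
  qed
qed

lemma singular_derivative_level_set_small:
  fixes a b :: "real \<times> real \<Rightarrow> real"
  assumes a: "(a has_derivative (\<lambda>h. m11 * fst h + m12 * snd h)) (at p0)"
    and b: "(b has_derivative (\<lambda>h. m21 * fst h + m22 * snd h)) (at p0)"
    and "a p0 = 0" "b p0 = 0"
    and det: "m11 * m22 - m12 * m21 = 0"
    and r: "(l1 * m11 + l2 * m21)\<^sup>2 + (l1 * m12 + l2 * m22)\<^sup>2 > 0"
    and "\<epsilon> > 0"
  shows "\<forall>\<^sub>F q in nhds p0. l1 * a q + l2 * b q = 0 \<longrightarrow> sqrt ((a q)\<^sup>2 + (b q)\<^sup>2) \<le> \<epsilon> * dist q p0"
proof -
  obtain K where "K \<ge> 0" and K: "\<And>h1 h2. \<bar>m11 * h1 + m12 * h2\<bar> + \<bar>m21 * h1 + m22 * h2\<bar>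
      \<le> K * \<bar>l1 * (m11 * h1 + m12 * h2) + l2 * (m21 * h1 + m22 * h2)\<bar>"
    using singular_matrix_bound[OF det r] by blast
  define e where "e = \<epsilon> / (K * (\<bar>l1\<bar> + \<bar>l2\<bar>) + 2)"
  have "K * (\<bar>l1\<bar> + \<bar>l2\<bar>) \<ge> 0" using \<open>K \<ge> 0\<close> by simp
  then have "K * (\<bar>l1\<bar> + \<bar>l2\<bar>) + 2 > 0" by linarith
  then have "e > 0" and \<epsilon>: "(K * (\<bar>l1\<bar> + \<bar>l2\<bar>) + 2) * e = \<epsilon>"
    using \<open>\<epsilon> > 0\<close> by (simp_all add: e_def)
  show ?thesis
    using has_derivative_eventually_le[OF a \<open>e > 0\<close>] has_derivative_eventually_le[OF b \<open>e > 0\<close>]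
  proof eventually_elim
    case (elim q)
    define d where "d = dist q p0"
    define X where "X = m11 * (fst q - fst p0) + m12 * (snd q - snd p0)"
    define Y where "Y = m21 * (fst q - fst p0) + m22 * (snd q - snd p0)"
    have aX: "\<bar>a q - X\<bar> \<le> e * d" and bY: "\<bar>b q - Y\<bar> \<le> e * d"
      using elim \<open>a p0 = 0\<close> \<open>b p0 = 0\<close> by (simp_all add: X_def Y_def d_def dist_norm)
    show ?case
    proof
      assume "l1 * a q + l2 * b q = 0"
      then have "\<bar>l1 * X + l2 * Y\<bar> = \<bar>l1 * (X - a q) + l2 * (Y - b q)\<bar>" by (simp add: algebra_simps)
      also have "\<dots> \<le> \<bar>l1\<bar> * (e * d) + \<bar>l2\<bar> * (e * d)"
        using aX bY abs_triangle_ineq[of "l1 * (X - a q)" "l2 * (Y - b q)"]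
          mult_left_mono[OF aX[unfolded abs_minus_commute[of "a q"]], of "\<bar>l1\<bar>"]
          mult_left_mono[OF bY[unfolded abs_minus_commute[of "b q"]], of "\<bar>l2\<bar>"]
        by (simp add: abs_mult)
      finally have "\<bar>X\<bar> + \<bar>Y\<bar> \<le> K * ((\<bar>l1\<bar> + \<bar>l2\<bar>) * (e * d))"
        using K[of "fst q - fst p0" "snd q - snd p0"] \<open>K \<ge> 0\<close> mult_left_mono
        unfolding X_def Y_def by (fastforce simp: algebra_simps)
      then have "\<bar>a q\<bar> + \<bar>b q\<bar> \<le> (K * (\<bar>l1\<bar> + \<bar>l2\<bar>) + 2) * e * d"
        using aX bY by (simp add: algebra_simps) linarith
      then show "sqrt ((a q)\<^sup>2 + (b q)\<^sup>2) \<le> \<epsilon> * dist q p0"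
        using sqrt_sum_squares_le_sum_abs[of "a q" "b q"] \<epsilon> by (simp add: d_def)
    qed
  qed
qed

lemma zero_near_of_little_o_on:
  fixes a b Q :: "real \<times> real \<Rightarrow> real"
  assumes small: "\<And>\<epsilon>. \<epsilon> > 0 \<Longrightarrow>
      \<forall>\<^sub>F q in nhds p0. q \<in> S \<longrightarrow> sqrt ((a q)\<^sup>2 + (b q)\<^sup>2) \<le> \<epsilon> * dist q p0"
    and "isCont Q p0" "Q p0 \<noteq> 0"
    and bound: "\<forall>\<^sub>F q in nhds p0. q \<in> S \<longrightarrow> (a q \<noteq> 0 \<or> b q \<noteq> 0) \<longrightarrow>
      \<bar>Q q\<bar> * dist q p0 \<le> C * sqrt ((a q)\<^sup>2 + (b q)\<^sup>2)"
  shows "\<forall>\<^sub>F q in nhds p0. q \<in> S \<longrightarrow> a q = 0 \<and> b q = 0"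
proof -
  define \<epsilon> where "\<epsilon> = \<bar>Q p0\<bar> / (2 * (\<bar>C\<bar> + 1))"
  have "\<epsilon> > 0" using \<open>Q p0 \<noteq> 0\<close> by (simp add: \<epsilon>_def add_pos_nonneg)
  have "((\<lambda>q. \<bar>Q q\<bar>) \<longlongrightarrow> \<bar>Q p0\<bar>) (nhds p0)"
    using \<open>isCont Q p0\<close> by (simp add: isCont_def tendsto_nhds_iff tendsto_rabs)
  then have "\<forall>\<^sub>F q in nhds p0. \<bar>Q p0\<bar> / 2 < \<bar>Q q\<bar>"
    by (rule order_tendstoD) (use \<open>Q p0 \<noteq> 0\<close> in simp)
  with small[OF \<open>\<epsilon> > 0\<close>] bound show ?thesis
  proof eventually_elim
    case (elim q)
    show ?case
    proof (intro impI, rule ccontr)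
      assume "q \<in> S" "\<not> (a q = 0 \<and> b q = 0)"
      then have D: "0 < sqrt ((a q)\<^sup>2 + (b q)\<^sup>2)" "sqrt ((a q)\<^sup>2 + (b q)\<^sup>2) \<le> \<epsilon> * dist q p0"
        and Q: "\<bar>Q q\<bar> * dist q p0 \<le> C * sqrt ((a q)\<^sup>2 + (b q)\<^sup>2)"
        using elim by (auto simp: sum_power2_gt_zero_iff)
      then have "0 < \<epsilon> * dist q p0" by linarith
      then have "dist q p0 > 0" using \<open>\<epsilon> > 0\<close> by (simp add: zero_less_mult_iff)
      have "C * sqrt ((a q)\<^sup>2 + (b q)\<^sup>2) \<le> (\<bar>C\<bar> + 1) * sqrt ((a q)\<^sup>2 + (b q)\<^sup>2)"
        using D(1) by (intro mult_right_mono) auto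
      also have "\<dots> \<le> (\<bar>C\<bar> + 1) * (\<epsilon> * dist q p0)"
        using D(2) by (intro mult_left_mono) auto
      finally have "\<bar>Q q\<bar> * dist q p0 \<le> (\<bar>C\<bar> + 1) * (\<epsilon> * dist q p0)"
        using Q by linarith
      also have "\<dots> = \<bar>Q p0\<bar> / 2 * dist q p0" by (simp add: \<epsilon>_def field_simps add_pos_nonneg)
      finally have "\<bar>Q q\<bar> \<le> \<bar>Q p0\<bar> / 2" using \<open>dist q p0 > 0\<close> by simp
      then show False using elim by simp
    qed
  qed
qed

lemma DERIV_div_sqrt_sum_squares:
  fixes A B :: "real \<Rightarrow> real"
  assumes "DERIV A x :> A'" "DERIV B x :> B'" "(A x)\<^sup>2 + (B x)\<^sup>2 > 0"
  shows "DERIV (\<lambda>t. A t / sqrt ((A t)\<^sup>2 + (B t)\<^sup>2)) x :>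
           (A' * (B x)\<^sup>2 - A x * B x * B') / sqrt ((A x)\<^sup>2 + (B x)\<^sup>2) ^ 3"
proof -
  define S where "S = sqrt ((A x)\<^sup>2 + (B x)\<^sup>2)"
  have S: "S > 0" "S\<^sup>2 = (A x)\<^sup>2 + (B x)\<^sup>2" using assms(3) by (simp_all add: S_def)
  have "DERIV (\<lambda>t. A t / sqrt ((A t)\<^sup>2 + (B t)\<^sup>2)) x :>
          (A' * S - A x * (inverse S / 2 * (2 * A x * A' + 2 * B x * B'))) / (S * S)"
    unfolding S_def using assms
    by (intro DERIV_divide DERIV_chain2[OF DERIV_real_sqrt] derivative_eq_intros) auto
  also have "A' * S - A x * (inverse S / 2 * (2 * A x * A' + 2 * B x * B'))
      = (A' * S\<^sup>2 - A x * (A x * A' + B x * B')) / S"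
    using S(1) by (simp add: field_simps power2_eq_square)
  also have "A' * S\<^sup>2 - A x * (A x * A' + B x * B') = A' * (B x)\<^sup>2 - A x * B x * B'"
    unfolding S(2) by (simp add: algebra_simps power2_eq_square)
  finally show ?thesis by (simp add: S_def power3_eq_cube mult.commute)
qed

lemma divergence_of_normalized_field:
  fixes a b :: "real \<times> real \<Rightarrow> real"
  assumes a_x: "DERIV (\<lambda>t. a (t, snd p)) (fst p) :> a_x"
    and a_y: "DERIV (\<lambda>t. a (fst p, t)) (snd p) :> a_y"
    and b_x: "DERIV (\<lambda>t. b (t, snd p)) (fst p) :> b_x"
    and b_y: "DERIV (\<lambda>t. b (fst p, t)) (snd p) :> b_y"
    and "a p \<noteq> 0 \<or> b p \<noteq> 0"
  shows "px (\<lambda>q. a q / sqrt ((a q)\<^sup>2 + (b q)\<^sup>2)) p + py (\<lambda>q. b q / sqrt ((a q)\<^sup>2 + (b q)\<^sup>2)) p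
       = (a_x * (b p)\<^sup>2 - (a_y + b_x) * a p * b p + b_y * (a p)\<^sup>2) / sqrt ((a p)\<^sup>2 + (b p)\<^sup>2) ^ 3"
proof -
  have pos: "(a p)\<^sup>2 + (b p)\<^sup>2 > 0" using assms(5) by (simp add: sum_power2_gt_zero_iff)
  have "px (\<lambda>q. a q / sqrt ((a q)\<^sup>2 + (b q)\<^sup>2)) p
      = (a_x * (b p)\<^sup>2 - a p * b p * b_x) / sqrt ((a p)\<^sup>2 + (b p)\<^sup>2) ^ 3"
    unfolding px_def using DERIV_div_sqrt_sum_squares[OF a_x b_x] pos
    by (intro DERIV_imp_deriv) simp
  moreover have "py (\<lambda>q. b q / sqrt ((a q)\<^sup>2 + (b q)\<^sup>2)) p
      = (b_y * (a p)\<^sup>2 - b p * a p * a_y) / sqrt ((a p)\<^sup>2 + (b p)\<^sup>2) ^ 3"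
    unfolding py_def using DERIV_div_sqrt_sum_squares[OF b_y a_y] pos
    by (intro DERIV_imp_deriv) (simp add: add.commute)
  ultimately show ?thesis by (simp add: add_divide_distrib[symmetric] algebra_simps)
qed

lemma inj_matrix_of_det_nonzero:
  fixes m11 m12 m21 m22 :: real
  assumes "m11 * m22 - m12 * m21 \<noteq> 0"
  shows "inj (\<lambda>h. (m11 * fst h + m12 * snd h, m21 * fst h + m22 * snd h))"
proof (rule injI)
  fix h k :: "real \<times> real"
  assume "(m11 * fst h + m12 * snd h, m21 * fst h + m22 * snd h)
        = (m11 * fst k + m12 * snd k, m21 * fst k + m22 * snd k)"
  then have "m11 * (fst h - fst k) + m12 * (snd h - snd k) = 0"
    and "m21 * (fst h - fst k) + m22 * (snd h - snd k) = 0" by (simp_all add: algebra_simps)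
  then have "(m11 * m22 - m12 * m21) * (fst h - fst k) = 0"
    and "(m11 * m22 - m12 * m21) * (snd h - snd k) = 0" by algebra+
  then show "h = k" using assms by (simp add: prod_eq_iff)
qed

lemma quadratic_form_bound_on_line:
  fixes a b a_x a_y b_x b_y l1 l2 C d :: real
  assumes line: "l1 * a + l2 * b = 0" and "a \<noteq> 0 \<or> b \<noteq> 0"
    and bound: "\<bar>a_x * b\<^sup>2 - (a_y + b_x) * a * b + b_y * a\<^sup>2\<bar> * d \<le> C * sqrt (a\<^sup>2 + b\<^sup>2) ^ 3"
  shows "\<bar>l1\<^sup>2 * a_x + l1 * l2 * (a_y + b_x) + l2\<^sup>2 * b_y\<bar> * d \<le> C * (l1\<^sup>2 + l2\<^sup>2) * sqrt (a\<^sup>2 + b\<^sup>2)"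
proof -
  define N where "N = a_x * b\<^sup>2 - (a_y + b_x) * a * b + b_y * a\<^sup>2"
  define Q where "Q = l1\<^sup>2 * a_x + l1 * l2 * (a_y + b_x) + l2\<^sup>2 * b_y"
  define L where "L = l1\<^sup>2 + l2\<^sup>2"
  define D where "D = sqrt (a\<^sup>2 + b\<^sup>2)"
  have "D > 0" "D\<^sup>2 = a\<^sup>2 + b\<^sup>2" using assms(2) by (simp_all add: D_def sum_power2_gt_zero_iff)
  have "L \<ge> 0" by (simp add: L_def)
  have "N * L = Q * D\<^sup>2"
    unfolding N_def Q_def L_def \<open>D\<^sup>2 = a\<^sup>2 + b\<^sup>2\<close> using line by algebra
  then have "\<bar>Q\<bar> * D\<^sup>2 = \<bar>N\<bar> * L"
    using \<open>L \<ge> 0\<close> by (metis abs_mult abs_of_nonneg abs_power2)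
  then have "\<bar>Q\<bar> * d * D\<^sup>2 = \<bar>N\<bar> * d * L" by (simp add: algebra_simps)
  also have "\<dots> \<le> C * D ^ 3 * L"
    using bound \<open>L \<ge> 0\<close> by (intro mult_right_mono) (simp_all add: N_def D_def)
  also have "\<dots> = (C * L * D) * D\<^sup>2" by (simp add: power2_eq_square power3_eq_cube)
  finally show ?thesis
    using \<open>D > 0\<close> by (simp add: Q_def L_def D_def)
qed

lemma level_line_in_zero_set:
  fixes a b a_x a_y b_x b_y :: "real \<times> real \<Rightarrow> real"
  assumes da: "(a has_derivative (\<lambda>h. a_x p0 * fst h + a_y p0 * snd h)) (at p0)"
    and db: "(b has_derivative (\<lambda>h. b_x p0 * fst h + b_y p0 * snd h)) (at p0)"
    and cont: "isCont a_x p0" "isCont a_y p0" "isCont b_x p0" "isCont b_y p0"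
    and "a p0 = 0" "b p0 = 0"
    and det: "a_x p0 * b_y p0 - a_y p0 * b_x p0 = 0"
    and Q0: "l1\<^sup>2 * a_x p0 + l1 * l2 * (a_y p0 + b_x p0) + l2\<^sup>2 * b_y p0 \<noteq> 0"
    and curv: "\<forall>\<^sub>F q in nhds p0. (a q \<noteq> 0 \<or> b q \<noteq> 0) \<longrightarrow>
      \<bar>a_x q * (b q)\<^sup>2 - (a_y q + b_x q) * a q * b q + b_y q * (a q)\<^sup>2\<bar> * dist q p0
        \<le> C * sqrt ((a q)\<^sup>2 + (b q)\<^sup>2) ^ 3"
  shows "\<forall>\<^sub>F q in nhds p0. l1 * a q + l2 * b q = 0 \<longrightarrow> a q = 0 \<and> b q = 0"
proof -
  define Q where "Q q = l1\<^sup>2 * a_x q + l1 * l2 * (a_y q + b_x q) + l2\<^sup>2 * b_y q" for q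
  have "l1 * (l1 * a_x p0 + l2 * b_x p0) + l2 * (l1 * a_y p0 + l2 * b_y p0) \<noteq> 0"
    using Q0 by (simp add: algebra_simps power2_eq_square)
  then have grad: "(l1 * a_x p0 + l2 * b_x p0)\<^sup>2 + (l1 * a_y p0 + l2 * b_y p0)\<^sup>2 > 0"
    by (auto simp: sum_power2_gt_zero_iff)
  have "\<forall>\<^sub>F q in nhds p0. q \<in> {q. l1 * a q + l2 * b q = 0} \<longrightarrow> a q = 0 \<and> b q = 0"
  proof (rule zero_near_of_little_o_on)
    show "\<forall>\<^sub>F q in nhds p0. q \<in> {q. l1 * a q + l2 * b q = 0} \<longrightarrow>
        sqrt ((a q)\<^sup>2 + (b q)\<^sup>2) \<le> \<epsilon> * dist q p0" if "\<epsilon> > 0" for \<epsilon>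
      using singular_derivative_level_set_small[OF da db \<open>a p0 = 0\<close> \<open>b p0 = 0\<close> det grad that] by simp
    show "isCont Q p0" unfolding Q_def by (intro continuous_intros cont)
    show "Q p0 \<noteq> 0" using Q0 by (simp add: Q_def)
    show "\<forall>\<^sub>F q in nhds p0. q \<in> {q. l1 * a q + l2 * b q = 0} \<longrightarrow> (a q \<noteq> 0 \<or> b q \<noteq> 0) \<longrightarrow>
        \<bar>Q q\<bar> * dist q p0 \<le> C * (l1\<^sup>2 + l2\<^sup>2) * sqrt ((a q)\<^sup>2 + (b q)\<^sup>2)"
      using curv by eventually_elim (auto simp: Q_def intro: quadratic_form_bound_on_line)
  qed
  then show ?thesis by simp
qed

lemma zero_set_C1_arc_of_singular_jacobian:
  fixes a b a_x a_y b_x b_y :: "real \<times> real \<Rightarrow> real"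
  assumes "open W" "p0 \<in> W"
    and a_x: "\<And>q. q \<in> W \<Longrightarrow> DERIV (\<lambda>t. a (t, snd q)) (fst q) :> a_x q"
    and a_y: "\<And>q. q \<in> W \<Longrightarrow> DERIV (\<lambda>t. a (fst q, t)) (snd q) :> a_y q"
    and b_x: "\<And>q. q \<in> W \<Longrightarrow> DERIV (\<lambda>t. b (t, snd q)) (fst q) :> b_x q"
    and b_y: "\<And>q. q \<in> W \<Longrightarrow> DERIV (\<lambda>t. b (fst q, t)) (snd q) :> b_y q"
    and cont: "continuous_on W a" "continuous_on W b" "continuous_on W a_x" "continuous_on W a_y"
      "continuous_on W b_x" "continuous_on W b_y"
    and "a p0 = 0" "b p0 = 0"
    and jac: "a_x p0 \<noteq> 0 \<or> a_y p0 \<noteq> 0 \<or> b_x p0 \<noteq> 0 \<or> b_y p0 \<noteq> 0"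
    and det: "a_x p0 * b_y p0 - a_y p0 * b_x p0 = 0"
    and curv: "\<forall>\<^sub>F q in nhds p0. (a q \<noteq> 0 \<or> b q \<noteq> 0) \<longrightarrow>
      \<bar>a_x q * (b q)\<^sup>2 - (a_y q + b_x q) * a q * b q + b_y q * (a q)\<^sup>2\<bar> * dist q p0
        \<le> C * sqrt ((a q)\<^sup>2 + (b q)\<^sup>2) ^ 3"
  shows "\<exists>V. open V \<and> p0 \<in> V \<and> V \<subseteq> W \<and> C1_arc_through (V \<inter> {q. a q = 0 \<and> b q = 0}) p0"
proof -
  have isCont: "isCont f p0" if "continuous_on W f" for f
    using that \<open>open W\<close> \<open>p0 \<in> W\<close> continuous_on_eq_continuous_at by blast
  have da: "(a has_derivative (\<lambda>h. a_x p0 * fst h + a_y p0 * snd h)) (at p0)"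
    by (rule has_derivative_of_partials[where fx = a_x, OF \<open>open W\<close> \<open>p0 \<in> W\<close>
          a_x[OF \<open>p0 \<in> W\<close>] a_y isCont[OF cont(4)]])
  have db: "(b has_derivative (\<lambda>h. b_x p0 * fst h + b_y p0 * snd h)) (at p0)"
    by (rule has_derivative_of_partials[where fx = b_x, OF \<open>open W\<close> \<open>p0 \<in> W\<close>
          b_x[OF \<open>p0 \<in> W\<close>] b_y isCont[OF cont(6)]])
  obtain l1 l2 where Q0: "l1\<^sup>2 * a_x p0 + l1 * l2 * (a_y p0 + b_x p0) + l2\<^sup>2 * b_y p0 \<noteq> 0"
    using quadratic_form_nonzero[OF det jac] by blast
  define \<phi> where "\<phi> q = l1 * a q + l2 * b q" for q
  obtain \<rho> where "\<rho> > 0" and \<rho>: "\<And>q. dist q p0 < \<rho> \<Longrightarrow> \<phi> q = 0 \<Longrightarrow> a q = 0 \<and> b q = 0"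
    using level_line_in_zero_set[OF da db isCont[OF cont(3)] isCont[OF cont(4)] isCont[OF cont(5)]
        isCont[OF cont(6)] \<open>a p0 = 0\<close> \<open>b p0 = 0\<close> det Q0 curv]
    unfolding eventually_nhds_metric \<phi>_def by auto
  have "\<exists>V. open V \<and> p0 \<in> V \<and> V \<subseteq> W \<inter> ball p0 \<rho> \<and> C1_arc_through (V \<inter> {q. \<phi> q = 0}) p0"
  proof (rule zero_set_C1_arc[where \<phi>x = "\<lambda>q. l1 * a_x q + l2 * b_x q" and \<phi>y = "\<lambda>q. l1 * a_y q + l2 * b_y q"])
    show "open (W \<inter> ball p0 \<rho>)" "p0 \<in> W \<inter> ball p0 \<rho>" using \<open>open W\<close> \<open>p0 \<in> W\<close> \<open>\<rho> > 0\<close> by auto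
    show "DERIV (\<lambda>t. \<phi> (t, snd q)) (fst q) :> l1 * a_x q + l2 * b_x q"
      and "DERIV (\<lambda>t. \<phi> (fst q, t)) (snd q) :> l1 * a_y q + l2 * b_y q" if "q \<in> W \<inter> ball p0 \<rho>" for q
      using that unfolding \<phi>_def by (auto intro!: DERIV_add DERIV_cmult a_x a_y b_x b_y)
    show "continuous_on (W \<inter> ball p0 \<rho>) \<phi>" "continuous_on (W \<inter> ball p0 \<rho>) (\<lambda>q. l1 * a_x q + l2 * b_x q)"
      "continuous_on (W \<inter> ball p0 \<rho>) (\<lambda>q. l1 * a_y q + l2 * b_y q)"
      unfolding \<phi>_def using cont by (auto intro!: continuous_intros intro: continuous_on_subset)
    show "\<phi> p0 = 0" by (simp add: \<phi>_def \<open>a p0 = 0\<close> \<open>b p0 = 0\<close>)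
    have "l1 * (l1 * a_x p0 + l2 * b_x p0) + l2 * (l1 * a_y p0 + l2 * b_y p0) \<noteq> 0"
      using Q0 by (simp add: algebra_simps power2_eq_square)
    then show "l1 * a_x p0 + l2 * b_x p0 \<noteq> 0 \<or> l1 * a_y p0 + l2 * b_y p0 \<noteq> 0" by auto
  qed
  then obtain V where V: "open V" "p0 \<in> V" "V \<subseteq> W \<inter> ball p0 \<rho>"
    and arc: "C1_arc_through (V \<inter> {q. \<phi> q = 0}) p0" by blast
  have "V \<inter> {q. \<phi> q = 0} = V \<inter> {q. a q = 0 \<and> b q = 0}"
    using V(3) \<rho> by (auto simp: \<phi>_def dist_commute)
  then show ?thesis using V arc by auto
qed

theorem zero_set_isolated_or_C1_arc:
  fixes a b a_x a_y b_x b_y :: "real \<times> real \<Rightarrow> real"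
  assumes "open W" "p0 \<in> W"
    and a_x: "\<And>q. q \<in> W \<Longrightarrow> DERIV (\<lambda>t. a (t, snd q)) (fst q) :> a_x q"
    and a_y: "\<And>q. q \<in> W \<Longrightarrow> DERIV (\<lambda>t. a (fst q, t)) (snd q) :> a_y q"
    and b_x: "\<And>q. q \<in> W \<Longrightarrow> DERIV (\<lambda>t. b (t, snd q)) (fst q) :> b_x q"
    and b_y: "\<And>q. q \<in> W \<Longrightarrow> DERIV (\<lambda>t. b (fst q, t)) (snd q) :> b_y q"
    and cont: "continuous_on W a" "continuous_on W b" "continuous_on W a_x" "continuous_on W a_y"
      "continuous_on W b_x" "continuous_on W b_y"
    and "a p0 = 0" "b p0 = 0"
    and jac: "a_x p0 \<noteq> 0 \<or> a_y p0 \<noteq> 0 \<or> b_x p0 \<noteq> 0 \<or> b_y p0 \<noteq> 0"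
    and curv: "\<forall>\<^sub>F q in nhds p0. (a q \<noteq> 0 \<or> b q \<noteq> 0) \<longrightarrow>
      \<bar>a_x q * (b q)\<^sup>2 - (a_y q + b_x q) * a q * b q + b_y q * (a q)\<^sup>2\<bar> * dist q p0
        \<le> C * sqrt ((a q)\<^sup>2 + (b q)\<^sup>2) ^ 3"
  shows "(\<forall>\<^sub>F q in nhds p0. a q = 0 \<and> b q = 0 \<longrightarrow> q = p0)
       \<or> (\<exists>V. open V \<and> p0 \<in> V \<and> V \<subseteq> W \<and> C1_arc_through (V \<inter> {q. a q = 0 \<and> b q = 0}) p0)"
proof (cases "a_x p0 * b_y p0 - a_y p0 * b_x p0 = 0")
  case True
  then show ?thesis using zero_set_C1_arc_of_singular_jacobian[OF assms(1-15) True curv] by blast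
next
  case False
  have isCont: "isCont f p0" if "continuous_on W f" for f
    using that \<open>open W\<close> \<open>p0 \<in> W\<close> continuous_on_eq_continuous_at by blast
  have da: "(a has_derivative (\<lambda>h. a_x p0 * fst h + a_y p0 * snd h)) (at p0)"
    by (rule has_derivative_of_partials[where fx = a_x, OF \<open>open W\<close> \<open>p0 \<in> W\<close>
          a_x[OF \<open>p0 \<in> W\<close>] a_y isCont[OF cont(4)]])
  have db: "(b has_derivative (\<lambda>h. b_x p0 * fst h + b_y p0 * snd h)) (at p0)"
    by (rule has_derivative_of_partials[where fx = b_x, OF \<open>open W\<close> \<open>p0 \<in> W\<close>
          b_x[OF \<open>p0 \<in> W\<close>] b_y isCont[OF cont(6)]])
  have "\<forall>\<^sub>F q in nhds p0. (a q, b q) = 0 \<longrightarrow> q = p0"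
    using isolated_zero_of_injective_derivative[OF has_derivative_Pair[OF da db] inj_matrix_of_det_nonzero[OF False]]
      \<open>a p0 = 0\<close> \<open>b p0 = 0\<close> by (simp add: zero_prod_def)
  then show ?thesis by (auto simp: zero_prod_def)
qed

section \<open>The singular set of u\<close>

definition hgrad1 :: "(real \<times> real \<Rightarrow> real) \<Rightarrow> real \<times> real \<Rightarrow> real" where
  "hgrad1 u p = px u p - snd p"

definition hgrad2 :: "(real \<times> real \<Rightarrow> real) \<Rightarrow> real \<times> real \<Rightarrow> real" where
  "hgrad2 u p = py u p + fst p"

lemma Sing_eq_hgrad: "Sing \<Omega> u = {p \<in> \<Omega>. hgrad1 u p = 0 \<and> hgrad2 u p = 0}"
  by (simp add: Sing_def hgrad1_def hgrad2_def)

lemma C1_on_partials: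
  assumes "C1_on \<Omega> f" "p \<in> \<Omega>"
  shows "DERIV (\<lambda>t. f (t, snd p)) (fst p) :> px f p" "DERIV (\<lambda>t. f (fst p, t)) (snd p) :> py f p"
  using assms unfolding C1_on_def px_def py_def by (simp_all add: DERIV_deriv_iff_field_differentiable)

lemma C2_on_hgrad_partials:
  assumes "C2_on \<Omega> u" "p \<in> \<Omega>"
  shows "DERIV (\<lambda>t. hgrad1 u (t, snd p)) (fst p) :> px (px u) p"
    and "DERIV (\<lambda>t. hgrad1 u (fst p, t)) (snd p) :> py (px u) p - 1"
    and "DERIV (\<lambda>t. hgrad2 u (t, snd p)) (fst p) :> px (py u) p + 1"
    and "DERIV (\<lambda>t. hgrad2 u (fst p, t)) (snd p) :> py (py u) p"
  using assms C1_on_partials[of \<Omega> "px u" p] C1_on_partials[of \<Omega> "py u" p]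
  unfolding C2_on_def hgrad1_def hgrad2_def
  by (auto intro!: derivative_eq_intros)

lemma C2_on_hgrad_continuous:
  assumes "C2_on \<Omega> u"
  shows "continuous_on \<Omega> (hgrad1 u)" "continuous_on \<Omega> (hgrad2 u)"
    "continuous_on \<Omega> (px (px u))" "continuous_on \<Omega> (\<lambda>p. py (px u) p - 1)"
    "continuous_on \<Omega> (\<lambda>p. px (py u) p + 1)" "continuous_on \<Omega> (py (py u))"
  using assms unfolding C2_on_def C1_on_def hgrad1_def[abs_def] hgrad2_def[abs_def]
  by (auto intro!: continuous_intros)

lemma C2_on_mixed_partials_eq:
  assumes "C2_on \<Omega> u" "open \<Omega>" "p \<in> \<Omega>"
  shows "py (px u) p = px (py u) p"
proof (rule mixed_partials_eq[OF assms(2,3)])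
  have C1: "C1_on \<Omega> u" "C1_on \<Omega> (px u)" "C1_on \<Omega> (py u)" using assms(1) by (simp_all add: C2_on_def)
  show "DERIV (\<lambda>t. u (t, snd q)) (fst q) :> px u q" "DERIV (\<lambda>t. u (fst q, t)) (snd q) :> py u q"
    "DERIV (\<lambda>t. px u (fst q, t)) (snd q) :> py (px u) q" "DERIV (\<lambda>t. py u (t, snd q)) (fst q) :> px (py u) q"
    if "q \<in> \<Omega>" for q
    using C1_on_partials[OF C1(1) that] C1_on_partials[OF C1(2) that] C1_on_partials[OF C1(3) that] by simp_all
  show "isCont (py (px u)) p" "isCont (px (py u)) p"
    using C1 assms(2,3) by (auto simp: C1_on_def continuous_on_eq_continuous_at)
qed

lemma Hcurv_eq:
  assumes "C2_on \<Omega> u" "p \<in> \<Omega>" "p \<notin> Sing \<Omega> u"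
  shows "Hcurv u p = (px (px u) p * (hgrad2 u p)\<^sup>2
      - ((py (px u) p - 1) + (px (py u) p + 1)) * hgrad1 u p * hgrad2 u p
      + py (py u) p * (hgrad1 u p)\<^sup>2) / sqrt ((hgrad1 u p)\<^sup>2 + (hgrad2 u p)\<^sup>2) ^ 3"
proof -
  have "N1 u = (\<lambda>q. hgrad1 u q / sqrt ((hgrad1 u q)\<^sup>2 + (hgrad2 u q)\<^sup>2))"
    and "N2 u = (\<lambda>q. hgrad2 u q / sqrt ((hgrad1 u q)\<^sup>2 + (hgrad2 u q)\<^sup>2))"
    by (simp_all add: fun_eq_iff N1_def N2_def Dlen_def hgrad1_def hgrad2_def)
  moreover have "hgrad1 u p \<noteq> 0 \<or> hgrad2 u p \<noteq> 0" using assms(2,3) by (simp add: Sing_eq_hgrad)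
  ultimately show ?thesis
    unfolding Hcurv_def by (simp only:) (rule divergence_of_normalized_field[OF C2_on_hgrad_partials[OF assms(1,2)]])
qed

lemma Hcurv_bound_imp_numerator_bound:
  assumes "C2_on \<Omega> u" "open \<Omega>" "p0 \<in> Sing \<Omega> u" "open U" "p0 \<in> U"
    and H: "\<forall>p \<in> (U \<inter> \<Omega>) - Sing \<Omega> u. \<bar>Hcurv u p\<bar> \<le> C / dist p p0"
  shows "\<forall>\<^sub>F q in nhds p0. (hgrad1 u q \<noteq> 0 \<or> hgrad2 u q \<noteq> 0) \<longrightarrow>
      \<bar>px (px u) q * (hgrad2 u q)\<^sup>2 - ((py (px u) q - 1) + (px (py u) q + 1)) * hgrad1 u q * hgrad2 u q
        + py (py u) q * (hgrad1 u q)\<^sup>2\<bar> * dist q p0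
      \<le> C * sqrt ((hgrad1 u q)\<^sup>2 + (hgrad2 u q)\<^sup>2) ^ 3"
proof -
  have "\<forall>\<^sub>F q in nhds p0. q \<in> U \<inter> \<Omega>"
    using assms(2-5) by (intro eventually_nhds_in_open) (auto simp: Sing_def)
  then show ?thesis
  proof (rule eventually_mono, intro impI)
    fix q assume q: "q \<in> U \<inter> \<Omega>" and "hgrad1 u q \<noteq> 0 \<or> hgrad2 u q \<noteq> 0"
    then have "q \<notin> Sing \<Omega> u" by (simp add: Sing_eq_hgrad)
    then have "dist q p0 > 0" using \<open>p0 \<in> Sing \<Omega> u\<close> by auto
    have "sqrt ((hgrad1 u q)\<^sup>2 + (hgrad2 u q)\<^sup>2) > 0"
      using \<open>hgrad1 u q \<noteq> 0 \<or> hgrad2 u q \<noteq> 0\<close> by (simp add: sum_power2_gt_zero_iff)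
    moreover have "\<bar>Hcurv u q\<bar> \<le> C / dist q p0" using H q \<open>q \<notin> Sing \<Omega> u\<close> by blast
    ultimately show "\<bar>px (px u) q * (hgrad2 u q)\<^sup>2 - ((py (px u) q - 1) + (px (py u) q + 1)) * hgrad1 u q * hgrad2 u q
        + py (py u) q * (hgrad1 u q)\<^sup>2\<bar> * dist q p0
      \<le> C * sqrt ((hgrad1 u q)\<^sup>2 + (hgrad2 u q)\<^sup>2) ^ 3"
      using Hcurv_eq[OF assms(1) _ \<open>q \<notin> Sing \<Omega> u\<close>] q \<open>dist q p0 > 0\<close>
      by (simp add: abs_divide field_simps)
  qed
qed

theorem theoremB:
  fixes \<Omega> :: "(real \<times> real) set" and u :: "real \<times> real \<Rightarrow> real" and p0 :: "real \<times> real"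
  assumes "open \<Omega>" and "connected \<Omega>"
    and "C2_on \<Omega> u"
    and "p0 \<in> Sing \<Omega> u"
    and "\<exists>C>0. \<exists>U. open U \<and> p0 \<in> U \<and>
           (\<forall>p \<in> (U \<inter> \<Omega>) - Sing \<Omega> u. \<bar>Hcurv u p\<bar> \<le> C / dist p p0)"
  shows "(\<exists>e>0. ball p0 e \<inter> Sing \<Omega> u = {p0})
       \<or> (\<exists>V. open V \<and> p0 \<in> V \<and> C1_arc_through (V \<inter> Sing \<Omega> u) p0)"
proof -
  obtain C U where "open U" "p0 \<in> U" and H: "\<forall>p \<in> (U \<inter> \<Omega>) - Sing \<Omega> u. \<bar>Hcurv u p\<bar> \<le> C / dist p p0"
    using assms(5) by blast
  have p0: "p0 \<in> \<Omega>" "hgrad1 u p0 = 0" "hgrad2 u p0 = 0" using assms(4) by (simp_all add: Sing_eq_hgrad)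
  \<comment> \<open>By symmetry of the second derivatives these two entries differ by 2.\<close>
  have "py (px u) p0 - 1 \<noteq> 0 \<or> px (py u) p0 + 1 \<noteq> 0"
    using C2_on_mixed_partials_eq[OF assms(3,1) p0(1)] by auto
  then have "(\<forall>\<^sub>F q in nhds p0. hgrad1 u q = 0 \<and> hgrad2 u q = 0 \<longrightarrow> q = p0)
      \<or> (\<exists>V. open V \<and> p0 \<in> V \<and> V \<subseteq> \<Omega> \<and> C1_arc_through (V \<inter> {q. hgrad1 u q = 0 \<and> hgrad2 u q = 0}) p0)"
    by (intro zero_set_isolated_or_C1_arc[OF assms(1) p0(1) C2_on_hgrad_partials[OF assms(3)]
          C2_on_hgrad_continuous[OF assms(3)] p0(2,3) _
          Hcurv_bound_imp_numerator_bound[OF assms(3,1,4) \<open>open U\<close> \<open>p0 \<in> U\<close> H]]) auto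
  then show ?thesis
  proof (elim disjE exE conjE)
    assume "\<forall>\<^sub>F q in nhds p0. hgrad1 u q = 0 \<and> hgrad2 u q = 0 \<longrightarrow> q = p0"
    then obtain e where "e > 0" "\<And>q. dist q p0 < e \<Longrightarrow> hgrad1 u q = 0 \<and> hgrad2 u q = 0 \<longrightarrow> q = p0"
      unfolding eventually_nhds_metric by blast
    then have "ball p0 e \<inter> Sing \<Omega> u = {p0}" using assms(4) by (auto simp: Sing_eq_hgrad dist_commute)
    then show ?thesis using \<open>e > 0\<close> by blast
  next
    fix V assume "open V" "p0 \<in> V" "V \<subseteq> \<Omega>" "C1_arc_through (V \<inter> {q. hgrad1 u q = 0 \<and> hgrad2 u q = 0}) p0"
    moreover have "V \<inter> Sing \<Omega> u = V \<inter> {q. hgrad1 u q = 0 \<and> hgrad2 u q = 0}"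
      using \<open>V \<subseteq> \<Omega>\<close> by (auto simp: Sing_eq_hgrad)
    ultimately show ?thesis by auto
  qed
qed

end
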